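(* Let $z$ be a nonzero element of $Z_{\mathrm{gr}}(E(\Lambda_{\mathbf{q}}))$ which is homogeneous both for the length grading and for the $\mathbb{Z}$-grading in which $a_i$ has degree $1$, $\bar a_i$ degree $-1$ and $e_i$ degree $0$. Then there are integers $s, t \geqslant 0$ with $s \equiv t \pmod m$ and $c_0 \in K^*$ such that $z = \sum_{i=0}^{m-1} c_i \gamma_i^{s}\delta_i^{t}$ where, for $i = 0, \ldots, m-1$, $$c_i = (-1)^{is}\prod_{k=1}^{i}(q_k\cdots q_{k+t-1})^{-1}c_0 = (-1)^{it}\prod_{k=1}^{i}(q_k\cdots q_{k+s-1})^{-1}c_0,$$ and moreover $\zeta^{s} = (-1)^{mt}$ and $\zeta^{t} = (-1)^{ms}$.
   Context: Let $K$ be a field, $m \geqslant 1$, $\mathcal{Q}$ the quiver with vertices $0, \ldots, m-1$ (indices modulo $m$), arrows $a_i: i\to i+1$, $\bar a_i: i+1\to i$, trivial paths $e_i$; paths written left to right. For $\mathbf{q}=(q_0,\dots,q_{m-1})\in(K^* )^m$, $\Lambda_{\mathbf{q}} = K\mathcal{Q}/I_{\mathbf{q}}$ with $I_{\mathbf{q}}$ generated by $a_ia_{i+1}$, $\bar a_{i-1}\bar a_{i-2}$, $q_ia_i\bar a_i - \bar a_{i-1}a_{i-1}$; $\zeta = q_0\cdots q_{m-1}$; indices of the $q_k$ are taken modulo $m$. $E(\Lambda_{\mathbf{q}}) = \operatorname{Ext}^*_{\Lambda_{\mathbf{q}}}(\Lambda_{\mathbf{q}}/\mathfrak{r}, \Lambda_{\mathbf{q}}/\mathfrak{r})$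 ($\mathfrak r$ the Jacobson radical) with Yoneda product; since $\Lambda_{\mathbf q}$ is Koszul, it is identified with $K\mathcal{Q}$ modulo the ideal generated by $q_i^{-1}a_i\bar a_i + \bar a_{i-1}a_{i-1}$, $i=0,\dots,m-1$, graded by path length (length $n$ corresponding to $\operatorname{Ext}^n$). Write $\gamma_i^n = a_ia_{i+1}\cdots a_{i+n-1}$ and $\delta_i^n = \bar a_{i+n-1}\cdots\bar a_{i+1}\bar a_i$ (paths of length $n$; $\gamma_i^0=\delta_i^0=e_i$). The graded centre $Z_{\mathrm{gr}}(E)$ is the subalgebra generated by homogeneous $z$ of length $n$ with $zg = (-1)^{nk}gz$ for all homogeneous $g$ of length $k$. *)

theory Defs
  imports Main
begin

text \<open>Arrows of the quiver Q with vertices 0..m-1: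
  A j is a_j : j -> j+1 (mod m), B j is bar a_j : j+1 -> j (mod m).\<close>
datatype arr = A nat | B nat

fun src :: "nat \<Rightarrow> arr \<Rightarrow> nat" where
  "src m (A j) = j"
| "src m (B j) = Suc j mod m"

fun tgt :: "nat \<Rightarrow> arr \<Rightarrow> nat" where
  "tgt m (A j) = Suc j mod m"
| "tgt m (B j) = j"

fun arr_ok :: "nat \<Rightarrow> arr \<Rightarrow> bool" where
  "arr_ok m (A j) = (j < m)"
| "arr_ok m (B j) = (j < m)"

text \<open>A path is (start vertex, list of arrows), composed left to right;
  (i, []) is the trivial path e_i.\<close>
type_synonym path = "nat \<times> arr list"

fun valid_walk :: "nat \<Rightarrow> nat \<Rightarrow> arr list \<Rightarrow> bool" where
  "valid_walk m v [] = (v < m)"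
| "valid_walk m v (x # xs) =
     (v < m \<and> arr_ok m x \<and> src m x = v \<and> valid_walk m (tgt m x) xs)"

fun endpt :: "nat \<Rightarrow> nat \<Rightarrow> arr list \<Rightarrow> nat" where
  "endpt m v [] = v"
| "endpt m v (x # xs) = endpt m (tgt m x) xs"

definition valid_path :: "nat \<Rightarrow> path \<Rightarrow> bool" where
  "valid_path m p = valid_walk m (fst p) (snd p)"

text \<open>Product of paths (left to right); None means the product is zero.\<close>
definition pmul :: "nat \<Rightarrow> path \<Rightarrow> path \<Rightarrow> path option" where
  "pmul m p p' = (if endpt m (fst p) (snd p) = fst p'
                  then Some (fst p, snd p @ snd p') else None)"

text \<open>The path algebra KQ: finitely supported K-valued functions on valid paths.\<close>
definition KQ :: "nat \<Rightarrow> (path \<Rightarrow> 'k::field) set" where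
  "KQ m = {f. finite {p. f p \<noteq> 0} \<and> (\<forall>p. f p \<noteq> 0 \<longrightarrow> valid_path m p)}"

definition conv :: "nat \<Rightarrow> (path \<Rightarrow> 'k::field) \<Rightarrow> (path \<Rightarrow> 'k) \<Rightarrow> path \<Rightarrow> 'k" where
  "conv m f g r = (\<Sum>pp \<in> {(p, p'). f p \<noteq> 0 \<and> g p' \<noteq> 0 \<and> pmul m p p' = Some r}.
                      f (fst pp) * g (snd pp))"

definition pv :: "path \<Rightarrow> path \<Rightarrow> 'k::field" where
  "pv p = (\<lambda>r. if r = p then 1 else 0)"

text \<open>Generator of the relations of E: q_i^{-1} a_i abar_i + abar_{i-1} a_{i-1}.\<close>
definition relE :: "nat \<Rightarrow> (nat \<Rightarrow> 'k::field) \<Rightarrow> nat \<Rightarrow> path \<Rightarrow> 'k" where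
  "relE m q i = (\<lambda>r. (if r = (i, [A i, B i]) then inverse (q i) else 0)
                  + (if r = (i, [B ((i + m - 1) mod m), A ((i + m - 1) mod m)]) then 1 else 0))"

text \<open>The two-sided ideal of KQ generated by the relations (K-span of p * rel_i * p').\<close>
inductive_set IdE :: "nat \<Rightarrow> (nat \<Rightarrow> 'k::field) \<Rightarrow> (path \<Rightarrow> 'k) set"
  for m :: nat and q :: "nat \<Rightarrow> 'k" where
  zero: "(\<lambda>_. 0) \<in> IdE m q"
| step: "\<lbrakk>x \<in> IdE m q; valid_path m p; valid_path m p'; i < m\<rbrakk> \<Longrightarrow>
          (\<lambda>r. x r + c * conv m (conv m (pv p) (relE m q i)) (pv p') r) \<in> IdE m q"

definition plen :: "path \<Rightarrow> nat" where
  "plen p = length (snd p)"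

definition zdeg :: "path \<Rightarrow> int" where
  "zdeg p = int (length (filter (\<lambda>x. case x of A _ \<Rightarrow> True | B _ \<Rightarrow> False) (snd p)))
          - int (length (filter (\<lambda>x. case x of A _ \<Rightarrow> False | B _ \<Rightarrow> True) (snd p)))"

text \<open>x (an element of KQ representing a class in E) is homogeneous of length n in E.\<close>
definition len_hom :: "nat \<Rightarrow> (nat \<Rightarrow> 'k::field) \<Rightarrow> nat \<Rightarrow> (path \<Rightarrow> 'k) \<Rightarrow> bool" where
  "len_hom m q n x = (\<exists>y \<in> KQ m. (\<lambda>r. x r - y r) \<in> IdE m q \<and> (\<forall>p. y p \<noteq> 0 \<longrightarrow> plen p = n))"

definition bi_hom :: "nat \<Rightarrow> (nat \<Rightarrow> 'k::field) \<Rightarrow> nat \<Rightarrow> int \<Rightarrow> (path \<Rightarrow> 'k) \<Rightarrow> bool" where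
  "bi_hom m q n d x = (\<exists>y \<in> KQ m. (\<lambda>r. x r - y r) \<in> IdE m q \<and>
       (\<forall>p. y p \<noteq> 0 \<longrightarrow> plen p = n \<and> zdeg p = d))"

text \<open>Graded centre Z_gr(E): subalgebra generated by homogeneous graded-commuting elements
  (as a set of representatives in KQ, closed under congruence modulo the ideal).\<close>
inductive_set Zgr :: "nat \<Rightarrow> (nat \<Rightarrow> 'k::field) \<Rightarrow> (path \<Rightarrow> 'k) set"
  for m :: nat and q :: "nat \<Rightarrow> 'k" where
  gen: "\<lbrakk>x \<in> KQ m; len_hom m q n x;
         \<And>g k. g \<in> KQ m \<Longrightarrow> (\<forall>p. g p \<noteq> 0 \<longrightarrow> plen p = k) \<Longrightarrow>
            (\<lambda>r. conv m x g r - (-1) ^ (n * k) * conv m g x r) \<in> IdE m q\<rbrakk>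
        \<Longrightarrow> x \<in> Zgr m q"
| one: "(\<lambda>r. \<Sum>i<m. pv (i, []) r) \<in> Zgr m q"
| add: "\<lbrakk>x \<in> Zgr m q; y \<in> Zgr m q\<rbrakk> \<Longrightarrow> (\<lambda>r. x r + y r) \<in> Zgr m q"
| mul: "\<lbrakk>x \<in> Zgr m q; y \<in> Zgr m q\<rbrakk> \<Longrightarrow> conv m x y \<in> Zgr m q"
| smul: "x \<in> Zgr m q \<Longrightarrow> (\<lambda>r. c * x r) \<in> Zgr m q"
| cong: "\<lbrakk>x \<in> Zgr m q; y \<in> KQ m; (\<lambda>r. x r - y r) \<in> IdE m q\<rbrakk> \<Longrightarrow> y \<in> Zgr m q"

text \<open>gamma_i^s = a_i a_{i+1} ... a_{i+s-1} and delta_i^t = abar_{i+t-1} ... abar_i.\<close>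
definition gam :: "nat \<Rightarrow> nat \<Rightarrow> nat \<Rightarrow> path" where
  "gam m i s = (i mod m, map (\<lambda>j. A ((i + j) mod m)) [0..<s])"

definition dlt :: "nat \<Rightarrow> nat \<Rightarrow> nat \<Rightarrow> path" where
  "dlt m i t = ((i + t) mod m, map (\<lambda>j. B ((i + t - 1 - j) mod m)) [0..<t])"

end

theory Submission
  imports Defs
begin

(* We work directly in the path algebra KQ (finitely supported functions on
   paths, multiplied by convolution) and construct an explicit normal form modulo the ideal
   IdE of relations of the Koszul dual E.

   1. KQ is an associative algebra and IdE a two-sided ideal.
   2. The sign automorphism "twist" (a path of length l is multiplied by (-1)^l) fixes the
      relations.  Every element x of Zgr satisfies the twisted centrality  x a = a twist(x)
      modulo IdE for every arrow a; unlike graded centrality this condition is preserved by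
      all operations generating Zgr, and it is the only consequence we need.
   3. A path is encoded by its start vertex and its shape (the word of forward and backward
      steps).  Each path is congruent to a scalar swap_coeff times its sorted path, and the
      linear functional nf_coeff that weights paths by these scalars vanishes on IdE.  Hence a
      bihomogeneous element not in IdE is congruent to a nonzero  Sum_v C v gamma_v^s delta^t.
   4. Applying nf_coeff to the commutation with the arrows a_j and a-bar_j gives s = t (mod m)
      and two first-order recurrences for C around the cycle; solving them yields the two
      closed formulas for the coefficients, and one turn around the cycle yields the
      identities for zeta^s and zeta^t. *)

section \<open>The path algebra: supports and convolution\<close>

definition supp :: "(path \<Rightarrow> 'k::field) \<Rightarrow> path set" where
  "supp f = {p. f p \<noteq> 0}"

abbreviation finsupp :: "(path \<Rightarrow> 'k::field) \<Rightarrow> bool" where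
  "finsupp f \<equiv> finite (supp f)"

text \<open>Concatenation of paths (ignoring whether the end and start vertex match).\<close>
definition cat :: "path \<Rightarrow> path \<Rightarrow> path" where
  "cat p p' = (fst p, snd p @ snd p')"

lemma endpt_append: "endpt m v (xs @ ys) = endpt m (endpt m v xs) ys"
  by (induction xs arbitrary: v) auto

lemma pmul_Some: "pmul m p p' = Some r \<longleftrightarrow> endpt m (fst p) (snd p) = fst p' \<and> r = cat p p'"
  by (auto simp: pmul_def cat_def)

lemma conv_expand:
  fixes f g :: "path \<Rightarrow> 'k::field"
  assumes "finite S" "finite T" "supp f \<subseteq> S" "supp g \<subseteq> T"
  shows "conv m f g r = (\<Sum>p\<in>S. \<Sum>p'\<in>T. if pmul m p p' = Some r then f p * g p' else 0)"
proof -
  have "conv m f g r = (\<Sum>pp\<in>S \<times> T. if pmul m (fst pp) (snd pp) = Some r then f (fst pp) * g (snd pp) else 0)"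
    unfolding conv_def
    by (rule sum.mono_neutral_cong_left) (use assms in \<open>auto simp: supp_def\<close>)
  also have "\<dots> = (\<Sum>p\<in>S. \<Sum>p'\<in>T. if pmul m p p' = Some r then f p * g p' else 0)"
    by (simp add: sum.cartesian_product case_prod_beta)
  finally show ?thesis .
qed

lemma supp_conv_pmul:
  assumes "r \<in> supp (conv m f g)"
  shows "\<exists>p\<in>supp f. \<exists>p'\<in>supp g. pmul m p p' = Some r"
proof -
  from assms have "conv m f g r \<noteq> 0" by (simp add: supp_def)
  then obtain pp where "pp \<in> {(p, p'). f p \<noteq> 0 \<and> g p' \<noteq> 0 \<and> pmul m p p' = Some r}"
    unfolding conv_def by (meson sum.neutral)
  thus ?thesis by (force simp: supp_def)
qed

lemma supp_conv: "supp (conv m f g) \<subseteq> (\<lambda>(p,p'). cat p p') ` (supp f \<times> supp g)"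
  using supp_conv_pmul by (fastforce simp: pmul_Some)

lemma finsupp_conv: "finsupp f \<Longrightarrow> finsupp g \<Longrightarrow> finsupp (conv m f g)"
  by (rule finite_subset[OF supp_conv]) auto

lemma finsupp_add: "finsupp f \<Longrightarrow> finsupp g \<Longrightarrow> finsupp (\<lambda>r. f r + g r)"
  by (rule finite_subset[of _ "supp f \<union> supp g"]) (auto simp: supp_def)

lemma finsupp_smul: "finsupp f \<Longrightarrow> finsupp (\<lambda>r. a * f r)"
  by (rule finite_subset[of _ "supp f"]) (auto simp: supp_def)

lemma finsupp_sum: "finite S \<Longrightarrow> (\<And>i. i \<in> S \<Longrightarrow> finsupp (F i)) \<Longrightarrow> finsupp (\<lambda>r. \<Sum>i\<in>S. F i r)"
proof (induction S rule: finite_induct)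
  case empty thus ?case by (simp add: supp_def)
next
  case (insert x F) thus ?case by (simp add: finsupp_add)
qed

lemma supp_pv [simp]: "supp (pv p :: path \<Rightarrow> 'k::field) = {p}"
  by (auto simp: supp_def pv_def)

lemma finsupp_pv [simp]: "finsupp (pv p :: path \<Rightarrow> 'k::field)"
  by simp

lemma finsupp_zero [simp]: "finsupp (\<lambda>_. 0::'k::field)"
  by (simp add: supp_def)

lemma conv_lin_left:
  fixes f g h :: "path \<Rightarrow> 'k::field"
  assumes "finsupp f" "finsupp g" "finsupp h"
  shows "conv m (\<lambda>r. a * f r + b * g r) h = (\<lambda>r. a * conv m f h r + b * conv m g h r)"
proof
  fix r
  let ?S = "supp f \<union> supp g"
  have "supp (\<lambda>r. a * f r + b * g r) \<subseteq> ?S" by (auto simp: supp_def)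
  with assms show "conv m (\<lambda>r. a * f r + b * g r) h r = a * conv m f h r + b * conv m g h r"
    by (simp add: conv_expand[of ?S "supp h"] sum_distrib_left sum.distrib[symmetric]
        algebra_simps if_distrib cong: if_cong)
qed

lemma conv_lin_right:
  fixes f g h :: "path \<Rightarrow> 'k::field"
  assumes "finsupp f" "finsupp g" "finsupp h"
  shows "conv m h (\<lambda>r. a * f r + b * g r) = (\<lambda>r. a * conv m h f r + b * conv m h g r)"
proof
  fix r
  let ?S = "supp f \<union> supp g"
  have "supp (\<lambda>r. a * f r + b * g r) \<subseteq> ?S" by (auto simp: supp_def)
  with assms show "conv m h (\<lambda>r. a * f r + b * g r) r = a * conv m h f r + b * conv m h g r"
    by (simp add: conv_expand[of "supp h" ?S] sum_distrib_left sum.distrib[symmetric]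
        algebra_simps if_distrib cong: if_cong)
qed

lemma conv_smul_left:
  fixes f h :: "path \<Rightarrow> 'k::field"
  assumes "finsupp f" "finsupp h"
  shows "conv m (\<lambda>r. a * f r) h = (\<lambda>r. a * conv m f h r)"
  using conv_lin_left[OF assms(1) assms(1) assms(2), of m a 0] by simp

lemma conv_smul_right:
  fixes f h :: "path \<Rightarrow> 'k::field"
  assumes "finsupp f" "finsupp h"
  shows "conv m h (\<lambda>r. a * f r) = (\<lambda>r. a * conv m h f r)"
  using conv_lin_right[OF assms(1) assms(1) assms(2), of m a 0] by simp

lemma conv_add_left:
  fixes f g h :: "path \<Rightarrow> 'k::field"
  assumes "finsupp f" "finsupp g" "finsupp h"
  shows "conv m (\<lambda>r. f r + g r) h = (\<lambda>r. conv m f h r + conv m g h r)"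
  using conv_lin_left[OF assms, of m 1 1] by simp

lemma conv_add_right:
  fixes f g h :: "path \<Rightarrow> 'k::field"
  assumes "finsupp f" "finsupp g" "finsupp h"
  shows "conv m h (\<lambda>r. f r + g r) = (\<lambda>r. conv m h f r + conv m h g r)"
  using conv_lin_right[OF assms, of m 1 1] by simp

lemma conv_diff_left:
  fixes f g h :: "path \<Rightarrow> 'k::field"
  assumes "finsupp f" "finsupp g" "finsupp h"
  shows "conv m (\<lambda>r. f r - g r) h = (\<lambda>r. conv m f h r - conv m g h r)"
  using conv_lin_left[OF assms, of m 1 "-1"] by simp

lemma conv_diff_right:
  fixes f g h :: "path \<Rightarrow> 'k::field"
  assumes "finsupp f" "finsupp g" "finsupp h"
  shows "conv m h (\<lambda>r. f r - g r) = (\<lambda>r. conv m h f r - conv m h g r)"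
  using conv_lin_right[OF assms, of m 1 "-1"] by simp

lemma conv_zero_left [simp]: "conv m (\<lambda>_. 0) g = (\<lambda>_. 0)"
  by (auto simp: conv_def)

lemma conv_zero_right [simp]: "conv m f (\<lambda>_. 0) = (\<lambda>_. 0)"
  by (auto simp: conv_def)

lemma conv_pv_pv:
  "conv m (pv p) (pv p') =
     (if endpt m (fst p) (snd p) = fst p' then pv (cat p p') else (\<lambda>_. 0::'k::field))"
proof
  fix r
  have "conv m (pv p) (pv p') r = (if pmul m p p' = Some r then 1 else (0::'k))"
    by (subst conv_expand[of "{p}" "{p'}"]) (simp_all, auto simp: pv_def)
  thus "conv m (pv p) (pv p') r =
      (if endpt m (fst p) (snd p) = fst p' then pv (cat p p') else (\<lambda>_. 0::'k)) r"
    by (auto simp: pmul_Some pv_def)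
qed

lemma sum_pmul_collapse:
  assumes "finite U" "\<And>u. pmul m a b = Some u \<Longrightarrow> u \<in> U"
  shows "(\<Sum>u\<in>U. if pmul m a b = Some u then F u else 0) =
         (case pmul m a b of None \<Rightarrow> 0 | Some u \<Rightarrow> F u)"
proof (cases "pmul m a b")
  case None thus ?thesis by simp
next
  case (Some u0)
  hence "(\<Sum>u\<in>U. if pmul m a b = Some u then F u else 0) = (\<Sum>u\<in>U. if u0 = u then F u else 0)"
    by (intro sum.cong) auto
  also have "\<dots> = F u0" using assms Some by (simp add: sum.delta)
  finally show ?thesis using Some by simp
qed

lemma sum_swap_last_to_front4:
  "(\<Sum>u\<in>SU. \<Sum>c\<in>SC. \<Sum>a\<in>SA. \<Sum>b\<in>SB. F u c a b) =
   (\<Sum>c\<in>SC. \<Sum>a\<in>SA. \<Sum>b\<in>SB. \<Sum>u\<in>SU. (F u c a b::'a::comm_monoid_add))"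
proof -
  have "(\<Sum>u\<in>SU. \<Sum>c\<in>SC. \<Sum>a\<in>SA. \<Sum>b\<in>SB. F u c a b) = (\<Sum>c\<in>SC. \<Sum>u\<in>SU. \<Sum>a\<in>SA. \<Sum>b\<in>SB. F u c a b)"
    by (rule sum.swap)
  also have "\<dots> = (\<Sum>c\<in>SC. \<Sum>a\<in>SA. \<Sum>u\<in>SU. \<Sum>b\<in>SB. F u c a b)"
    by (intro sum.cong refl, rule sum.swap)
  also have "\<dots> = (\<Sum>c\<in>SC. \<Sum>a\<in>SA. \<Sum>b\<in>SB. \<Sum>u\<in>SU. F u c a b)"
    by (intro sum.cong refl, rule sum.swap)
  finally show ?thesis .
qed

lemma sum_swap_second_to_last4:
  "(\<Sum>a\<in>SA. \<Sum>w\<in>SV. \<Sum>b\<in>SB. \<Sum>c\<in>SC. F a w b c) =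
   (\<Sum>a\<in>SA. \<Sum>b\<in>SB. \<Sum>c\<in>SC. \<Sum>w\<in>SV. (F a w b c::'a::comm_monoid_add))"
proof -
  have "(\<Sum>a\<in>SA. \<Sum>w\<in>SV. \<Sum>b\<in>SB. \<Sum>c\<in>SC. F a w b c) = (\<Sum>a\<in>SA. \<Sum>b\<in>SB. \<Sum>w\<in>SV. \<Sum>c\<in>SC. F a w b c)"
    by (intro sum.cong refl, rule sum.swap)
  also have "\<dots> = (\<Sum>a\<in>SA. \<Sum>b\<in>SB. \<Sum>c\<in>SC. \<Sum>w\<in>SV. F a w b c)"
    by (intro sum.cong refl, rule sum.swap)
  finally show ?thesis .
qed

lemma sum_rotate3:
  "(\<Sum>a\<in>SA. \<Sum>b\<in>SB. \<Sum>c\<in>SC. F a b c) = (\<Sum>c\<in>SC. \<Sum>a\<in>SA. \<Sum>b\<in>SB. (F a b c::'a::comm_monoid_add))"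
proof -
  have "(\<Sum>a\<in>SA. \<Sum>b\<in>SB. \<Sum>c\<in>SC. F a b c) = (\<Sum>a\<in>SA. \<Sum>c\<in>SC. \<Sum>b\<in>SB. F a b c)"
    by (intro sum.cong refl, rule sum.swap)
  also have "\<dots> = (\<Sum>c\<in>SC. \<Sum>a\<in>SA. \<Sum>b\<in>SB. F a b c)"
    by (rule sum.swap)
  finally show ?thesis .
qed

definition conv3 :: "nat \<Rightarrow> (path \<Rightarrow> 'k::field) \<Rightarrow> (path \<Rightarrow> 'k) \<Rightarrow> (path \<Rightarrow> 'k) \<Rightarrow> path \<Rightarrow> 'k" where
  "conv3 m f g h r = (\<Sum>a\<in>supp f. \<Sum>b\<in>supp g. \<Sum>c\<in>supp h.
      if endpt m (fst a) (snd a) = fst b \<and> endpt m (fst b) (snd b) = fst c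
         \<and> r = (fst a, snd a @ snd b @ snd c)
      then f a * g b * h c else 0)"

lemma conv_conv_left_conv3:
  fixes f g h :: "path \<Rightarrow> 'k::field"
  assumes f: "finsupp f" "finsupp g" "finsupp h"
  shows "conv m (conv m f g) h r = conv3 m f g h r"
proof -
  let ?A = "supp f" and ?B = "supp g" and ?C = "supp h"
  let ?U = "(\<lambda>(p,p'). cat p p') ` (?A \<times> ?B)"
  let ?T = "\<lambda>a b c. if endpt m (fst a) (snd a) = fst b \<and> endpt m (fst b) (snd b) = fst c
      \<and> r = (fst a, snd a @ snd b @ snd c) then f a * g b * h c else 0"
  let ?F = "\<lambda>u c a b. if pmul m a b = Some u then (if pmul m u c = Some r then f a * g b * h c else 0) else 0"
  have U: "finite ?U" using f by auto
  have "conv m (conv m f g) h r = (\<Sum>u\<in>?U. \<Sum>c\<in>?C. if pmul m u c = Some r then conv m f g u * h c else 0)"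
    by (rule conv_expand) (use f U supp_conv[of m f g] in auto)
  also have "\<dots> = (\<Sum>u\<in>?U. \<Sum>c\<in>?C. \<Sum>a\<in>?A. \<Sum>b\<in>?B. ?F u c a b)"
  proof (intro sum.cong refl)
    fix u c
    show "(if pmul m u c = Some r then conv m f g u * h c else 0) = (\<Sum>a\<in>?A. \<Sum>b\<in>?B. ?F u c a b)"
      using f by (cases "pmul m u c = Some r")
        (auto simp: conv_expand[of ?A ?B] sum_distrib_right intro!: sum.cong sum.neutral)
  qed
  also have "\<dots> = (\<Sum>c\<in>?C. \<Sum>a\<in>?A. \<Sum>b\<in>?B. \<Sum>u\<in>?U. ?F u c a b)"
    by (rule sum_swap_last_to_front4)
  also have "\<dots> = (\<Sum>c\<in>?C. \<Sum>a\<in>?A. \<Sum>b\<in>?B. ?T a b c)"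
    by (intro sum.cong refl, subst sum_pmul_collapse[OF U])
       (force simp: pmul_Some, auto simp: pmul_def endpt_append split: option.split)
  also have "\<dots> = conv3 m f g h r"
    unfolding conv3_def by (rule sum_rotate3[symmetric])
  finally show ?thesis .
qed

lemma conv_conv_right_conv3:
  fixes f g h :: "path \<Rightarrow> 'k::field"
  assumes f: "finsupp f" "finsupp g" "finsupp h"
  shows "conv m f (conv m g h) r = conv3 m f g h r"
proof -
  let ?A = "supp f" and ?B = "supp g" and ?C = "supp h"
  let ?V = "(\<lambda>(p,p'). cat p p') ` (?B \<times> ?C)"
  let ?F = "\<lambda>a w b c. if pmul m b c = Some w then (if pmul m a w = Some r then f a * g b * h c else 0) else 0"
  have V: "finite ?V" using f by auto
  have "conv m f (conv m g h) r = (\<Sum>a\<in>?A. \<Sum>w\<in>?V. if pmul m a w = Some r then f a * conv m g h w else 0)"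
    by (rule conv_expand) (use f V supp_conv[of m g h] in auto)
  also have "\<dots> = (\<Sum>a\<in>?A. \<Sum>w\<in>?V. \<Sum>b\<in>?B. \<Sum>c\<in>?C. ?F a w b c)"
  proof (intro sum.cong refl)
    fix a w
    show "(if pmul m a w = Some r then f a * conv m g h w else 0) = (\<Sum>b\<in>?B. \<Sum>c\<in>?C. ?F a w b c)"
      using f by (cases "pmul m a w = Some r")
        (auto simp: conv_expand[of ?B ?C] sum_distrib_left mult.assoc intro!: sum.cong sum.neutral)
  qed
  also have "\<dots> = (\<Sum>a\<in>?A. \<Sum>b\<in>?B. \<Sum>c\<in>?C. \<Sum>w\<in>?V. ?F a w b c)"
    by (rule sum_swap_second_to_last4)
  also have "\<dots> = conv3 m f g h r"
    unfolding conv3_def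
    by (intro sum.cong refl, subst sum_pmul_collapse[OF V])
       (force simp: pmul_Some, auto simp: pmul_def endpt_append split: option.split)
  finally show ?thesis .
qed

lemma conv_assoc:
  fixes f g h :: "path \<Rightarrow> 'k::field"
  assumes "finsupp f" "finsupp g" "finsupp h"
  shows "conv m (conv m f g) h = conv m f (conv m g h)"
  using assms by (simp add: fun_eq_iff conv_conv_left_conv3 conv_conv_right_conv3)

lemma valid_walk_lt: "valid_walk m v w \<Longrightarrow> v < m"
  by (cases w) auto

lemma valid_walk_append:
  "valid_walk m v (xs @ ys) = (valid_walk m v xs \<and> valid_walk m (endpt m v xs) ys)"
  by (induction xs arbitrary: v) (auto dest: valid_walk_lt)

lemma valid_cat:
  "valid_path m u \<Longrightarrow> valid_path m p \<Longrightarrow> endpt m (fst u) (snd u) = fst p \<Longrightarrow> valid_path m (cat u p)"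
  by (simp add: valid_path_def cat_def valid_walk_append)

lemma KQ_iff: "f \<in> KQ m \<longleftrightarrow> finsupp f \<and> (\<forall>p \<in> supp f. valid_path m p)"
  by (auto simp: KQ_def supp_def)

lemma KQ_conv: "f \<in> KQ m \<Longrightarrow> g \<in> KQ m \<Longrightarrow> conv m f g \<in> KQ m"
  unfolding KQ_iff by (metis finsupp_conv supp_conv_pmul pmul_Some valid_cat)

lemma KQ_finsupp: "x \<in> KQ m \<Longrightarrow> finsupp x" by (simp add: KQ_iff)

lemma KQ_add: "x \<in> KQ m \<Longrightarrow> y \<in> KQ m \<Longrightarrow> (\<lambda>r. x r + y r) \<in> KQ m"
proof -
  assume a: "x \<in> KQ m" "y \<in> KQ m"
  have "finsupp (\<lambda>r. x r + y r)" by (rule finsupp_add) (use a in \<open>auto simp: KQ_iff\<close>)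
  moreover have "\<forall>p\<in>supp (\<lambda>r. x r + y r). valid_path m p"
    using a by (auto simp: KQ_iff supp_def) (metis add.left_neutral)
  ultimately show ?thesis by (simp add: KQ_iff)
qed

lemma KQ_smul: "x \<in> KQ m \<Longrightarrow> (\<lambda>r. c * x r) \<in> KQ m"
proof -
  assume a: "x \<in> KQ m"
  have "finsupp (\<lambda>r. c * x r)" by (rule finsupp_smul) (use a in \<open>auto simp: KQ_iff\<close>)
  moreover have "\<forall>p\<in>supp (\<lambda>r. c * x r). valid_path m p"
    using a by (auto simp: KQ_iff supp_def)
  ultimately show ?thesis by (simp add: KQ_iff)
qed

lemma KQ_pv: "valid_path m a \<Longrightarrow> pv a \<in> KQ m"
  by (simp add: KQ_iff)

lemma basis_decomp: "finsupp x \<Longrightarrow> x = (\<lambda>r. \<Sum>u\<in>supp x. x u * pv u r)"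
proof
  fix r assume "finsupp x"
  show "x r = (\<Sum>u\<in>supp x. x u * pv u r)"
  proof (cases "r \<in> supp x")
    case True
    have "(\<Sum>u\<in>supp x. x u * pv u r) = (\<Sum>u\<in>supp x. if u = r then x u else 0)"
      by (intro sum.cong) (auto simp: pv_def)
    thus ?thesis using True \<open>finsupp x\<close> by (simp add: sum.delta')
  next
    case False
    hence "x r = 0" by (simp add: supp_def)
    moreover have "(\<Sum>u\<in>supp x. x u * pv u r) = 0"
      by (rule sum.neutral) (use False in \<open>auto simp: pv_def\<close>)
    ultimately show ?thesis by simp
  qed
qed

lemma conv_sum_left:
  fixes g :: "path \<Rightarrow> 'k::field"
  assumes "finite S" "finsupp g" "\<And>u. u \<in> S \<Longrightarrow> finsupp (F u)"
  shows "conv m (\<lambda>r. \<Sum>u\<in>S. F u r) g = (\<lambda>r. \<Sum>u\<in>S. conv m (F u) g r)"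
  using assms
proof (induction S rule: finite_induct)
  case empty thus ?case by simp
next
  case (insert x S)
  have "conv m (\<lambda>r. \<Sum>u\<in>insert x S. F u r) g = conv m (\<lambda>r. F x r + (\<Sum>u\<in>S. F u r)) g"
    using insert by simp
  also have "\<dots> = (\<lambda>r. conv m (F x) g r + conv m (\<lambda>r. \<Sum>u\<in>S. F u r) g r)"
    by (rule conv_add_left) (use insert in \<open>auto intro: finsupp_sum\<close>)
  finally show ?case using insert by simp
qed

lemma conv_sum_right:
  fixes g :: "path \<Rightarrow> 'k::field"
  assumes "finite S" "finsupp g" "\<And>u. u \<in> S \<Longrightarrow> finsupp (F u)"
  shows "conv m g (\<lambda>r. \<Sum>u\<in>S. F u r) = (\<lambda>r. \<Sum>u\<in>S. conv m g (F u) r)"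
  using assms
proof (induction S rule: finite_induct)
  case empty thus ?case by simp
next
  case (insert x S)
  have "conv m g (\<lambda>r. \<Sum>u\<in>insert x S. F u r) = conv m g (\<lambda>r. F x r + (\<Sum>u\<in>S. F u r))"
    using insert by simp
  also have "\<dots> = (\<lambda>r. conv m g (F x) r + conv m g (\<lambda>r. \<Sum>u\<in>S. F u r) r)"
    by (rule conv_add_right) (use insert in \<open>auto intro: finsupp_sum\<close>)
  finally show ?case using insert by simp
qed

lemma KQ_lincomb: "(\<And>v. v < k \<Longrightarrow> valid_path m (P v)) \<Longrightarrow> (\<lambda>r. \<Sum>v<(k::nat). C v * pv (P v) r) \<in> KQ m"
proof (induction k)
  case 0 thus ?case by (simp add: KQ_iff supp_def)
next
  case (Suc k)
  have "(\<lambda>r. (\<Sum>v<(k::nat). C v * pv (P v) r) + C k * pv (P k) r) \<in> KQ m"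
    by (intro KQ_add KQ_smul KQ_pv Suc.IH) (use Suc.prems in auto)
  thus ?case by simp
qed

abbreviation relgen :: "nat \<Rightarrow> (nat \<Rightarrow> 'k::field) \<Rightarrow> path \<Rightarrow> nat \<Rightarrow> path \<Rightarrow> path \<Rightarrow> 'k" where
  "relgen m q p i p' \<equiv> conv m (conv m (pv p) (relE m q i)) (pv p')"

lemma finsupp_relE: "finsupp (relE m q i)"
  by (rule finite_subset[of _ "{(i, [A i, B i]), (i, [B ((i + m - 1) mod m), A ((i + m - 1) mod m)])}"])
     (auto simp: supp_def relE_def)

lemma finsupp_relgen: "finsupp (relgen m q p i p')"
  by (intro finsupp_conv finsupp_relE finsupp_pv)

lemma IdE_finsupp: "x \<in> IdE m q \<Longrightarrow> finsupp x"
  by (induction rule: IdE.induct) (auto intro!: finsupp_add finsupp_smul finsupp_relgen)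

lemma IdE_add: "y \<in> IdE m q \<Longrightarrow> x \<in> IdE m q \<Longrightarrow> (\<lambda>r. x r + y r) \<in> IdE m q"
proof (induction y rule: IdE.induct)
  case zero thus ?case by simp
next
  case (step y p p' i c)
  have "(\<lambda>r. x r + (y r + c * relgen m q p i p' r)) = (\<lambda>r. (x r + y r) + c * relgen m q p i p' r)"
    by (simp add: algebra_simps)
  moreover have "(\<lambda>r. (x r + y r) + c * relgen m q p i p' r) \<in> IdE m q"
    by (rule IdE.step) (use step in auto)
  ultimately show ?case by simp
qed

lemma IdE_smul: "x \<in> IdE m q \<Longrightarrow> (\<lambda>r. a * x r) \<in> IdE m q"
proof (induction x rule: IdE.induct)
  case zero thus ?case by (simp add: IdE.zero)
next
  case (step y p p' i c)
  have "(\<lambda>r. a * (y r + c * relgen m q p i p' r)) = (\<lambda>r. a * y r + (a * c) * relgen m q p i p' r)"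
    by (simp add: algebra_simps)
  moreover have "(\<lambda>r. a * y r + (a * c) * relgen m q p i p' r) \<in> IdE m q"
    by (rule IdE.step) (use step in auto)
  ultimately show ?case by simp
qed

lemma IdE_diff: "x \<in> IdE m q \<Longrightarrow> y \<in> IdE m q \<Longrightarrow> (\<lambda>r. x r - y r) \<in> IdE m q"
  using IdE_add[OF IdE_smul[of y m q "-1"], of x] by simp

lemma IdE_lin: "x \<in> IdE m q \<Longrightarrow> y \<in> IdE m q \<Longrightarrow> (\<lambda>r. a * x r + b * y r) \<in> IdE m q"
  by (intro IdE_add IdE_smul)

lemma IdE_sum: "finite S \<Longrightarrow> (\<And>i. i \<in> S \<Longrightarrow> F i \<in> IdE m q) \<Longrightarrow> (\<lambda>r. \<Sum>i\<in>S. F i r) \<in> IdE m q"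
proof (induction S rule: finite_induct)
  case empty thus ?case by (simp add: IdE.zero)
next
  case (insert x S) thus ?case by (simp add: IdE_add)
qed

lemma IdE_relgen: "valid_path m p \<Longrightarrow> valid_path m p' \<Longrightarrow> i < m \<Longrightarrow> relgen m q p i p' \<in> IdE m q"
proof -
  assume a: "valid_path m p" "valid_path m p'" "i < m"
  have "(\<lambda>r. (\<lambda>_. 0) r + 1 * relgen m q p i p' r) \<in> IdE m q"
    by (rule IdE.step[OF IdE.zero]) (use a in auto)
  thus ?thesis by simp
qed

lemma conv_pv_relgen:
  "conv m (pv u) (relgen m q p i p') =
     (if endpt m (fst u) (snd u) = fst p then relgen m q (cat u p) i p' else (\<lambda>_. 0))"
proof -
  have "conv m (pv u) (relgen m q p i p') = conv m (conv m (pv u) (conv m (pv p) (relE m q i))) (pv p')"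
    by (rule conv_assoc[symmetric]) (auto intro: finsupp_conv finsupp_relE)
  also have "\<dots> = conv m (conv m (conv m (pv u) (pv p)) (relE m q i)) (pv p')"
    by (subst conv_assoc[symmetric]) (auto intro: finsupp_conv finsupp_relE)
  finally show ?thesis by (simp add: conv_pv_pv)
qed

lemma conv_relgen_pv:
  "conv m (relgen m q p i p') (pv u) =
     (if endpt m (fst p') (snd p') = fst u then relgen m q p i (cat p' u) else (\<lambda>_. 0))"
proof -
  have "conv m (relgen m q p i p') (pv u) = conv m (conv m (pv p) (relE m q i)) (conv m (pv p') (pv u))"
    by (rule conv_assoc) (auto intro: finsupp_conv finsupp_relE)
  thus ?thesis by (simp add: conv_pv_pv)
qed

lemma conv_KQ_relgen:
  assumes x: "x \<in> KQ m" and v: "valid_path m p" "valid_path m p'" "i < m"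
  shows "conv m x (relgen m q p i p') \<in> IdE m q"
proof -
  have fx: "finsupp x" using x by (simp add: KQ_iff)
  have "conv m x (relgen m q p i p') = conv m (\<lambda>r. \<Sum>u\<in>supp x. x u * pv u r) (relgen m q p i p')"
    using basis_decomp[OF fx] by simp
  also have "\<dots> = (\<lambda>r. \<Sum>u\<in>supp x. conv m (\<lambda>r. x u * pv u r) (relgen m q p i p') r)"
    by (rule conv_sum_left) (auto simp: fx finsupp_relgen intro: finsupp_smul)
  also have "\<dots> = (\<lambda>r. \<Sum>u\<in>supp x. x u * conv m (pv u) (relgen m q p i p') r)"
    by (simp add: conv_smul_left finsupp_relgen)
  finally have e: "conv m x (relgen m q p i p') = (\<lambda>r. \<Sum>u\<in>supp x. x u * conv m (pv u) (relgen m q p i p') r)" .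
  show ?thesis unfolding e
  proof (rule IdE_sum[OF fx])
    fix u assume u: "u \<in> supp x"
    hence vu: "valid_path m u" using x by (simp add: KQ_iff)
    show "(\<lambda>r. x u * conv m (pv u) (relgen m q p i p') r) \<in> IdE m q"
      using vu v by (intro IdE_smul) (auto simp: conv_pv_relgen IdE.zero intro!: IdE_relgen valid_cat)
  qed
qed

lemma conv_relgen_KQ:
  assumes x: "x \<in> KQ m" and v: "valid_path m p" "valid_path m p'" "i < m"
  shows "conv m (relgen m q p i p') x \<in> IdE m q"
proof -
  have fx: "finsupp x" using x by (simp add: KQ_iff)
  have "conv m (relgen m q p i p') x = conv m (relgen m q p i p') (\<lambda>r. \<Sum>u\<in>supp x. x u * pv u r)"
    using basis_decomp[OF fx] by simp
  also have "\<dots> = (\<lambda>r. \<Sum>u\<in>supp x. conv m (relgen m q p i p') (\<lambda>r. x u * pv u r) r)"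
    by (rule conv_sum_right) (auto simp: fx finsupp_relgen intro: finsupp_smul)
  also have "\<dots> = (\<lambda>r. \<Sum>u\<in>supp x. x u * conv m (relgen m q p i p') (pv u) r)"
    by (simp add: conv_smul_right finsupp_relgen)
  finally have e: "conv m (relgen m q p i p') x = (\<lambda>r. \<Sum>u\<in>supp x. x u * conv m (relgen m q p i p') (pv u) r)" .
  show ?thesis unfolding e
  proof (rule IdE_sum[OF fx])
    fix u assume u: "u \<in> supp x"
    hence vu: "valid_path m u" using x by (simp add: KQ_iff)
    show "(\<lambda>r. x u * conv m (relgen m q p i p') (pv u) r) \<in> IdE m q"
      using vu v by (intro IdE_smul) (auto simp: conv_relgen_pv IdE.zero intro!: IdE_relgen valid_cat)
  qed
qed

lemma IdE_mult_left: "w \<in> IdE m q \<Longrightarrow> x \<in> KQ m \<Longrightarrow> conv m x w \<in> IdE m q"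
proof (induction w rule: IdE.induct)
  case zero thus ?case by (simp add: IdE.zero)
next
  case (step y p p' i c)
  have fx: "finsupp x" using step by (simp add: KQ_iff)
  have "conv m x (\<lambda>r. y r + c * relgen m q p i p' r) = (\<lambda>r. conv m x y r + c * conv m x (relgen m q p i p') r)"
    using conv_lin_right[OF IdE_finsupp[OF step(1)] finsupp_relgen fx, where a=1 and b=c and m=m] by simp
  moreover have "conv m x (relgen m q p i p') \<in> IdE m q" by (rule conv_KQ_relgen) (use step in auto)
  ultimately show ?case using IdE_add[OF IdE_smul[of _ m q c] step.IH[OF step.prems]] by simp
qed

lemma IdE_mult_right: "w \<in> IdE m q \<Longrightarrow> x \<in> KQ m \<Longrightarrow> conv m w x \<in> IdE m q"
proof (induction w rule: IdE.induct)
  case zero thus ?case by (simp add: IdE.zero)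
next
  case (step y p p' i c)
  have fx: "finsupp x" using step by (simp add: KQ_iff)
  have "conv m (\<lambda>r. y r + c * relgen m q p i p' r) x = (\<lambda>r. conv m y x r + c * conv m (relgen m q p i p') x r)"
    using conv_lin_left[OF IdE_finsupp[OF step(1)] finsupp_relgen fx, where a=1 and b=c and m=m] by simp
  moreover have "conv m (relgen m q p i p') x \<in> IdE m q" by (rule conv_relgen_KQ) (use step in auto)
  ultimately show ?case using IdE_add[OF IdE_smul[of _ m q c] step.IH[OF step.prems]] by simp
qed

section \<open>The sign twist and twisted centrality of Zgr\<close>

text \<open>The algebra automorphism of KQ multiplying a path of length l by (-1)^l.  It fixes the
  (quadratic) relations, hence preserves IdE.\<close>
definition twist :: "(path \<Rightarrow> 'k::field) \<Rightarrow> path \<Rightarrow> 'k" where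
  "twist f = (\<lambda>p. (-1) ^ plen p * f p)"

lemma supp_twist [simp]: "supp (twist f) = supp f"
  by (auto simp: supp_def twist_def)

lemma KQ_twist: "x \<in> KQ m \<Longrightarrow> twist x \<in> KQ m"
  by (simp add: KQ_iff)

lemma twist_conv: "conv m (twist f) (twist g) = twist (conv m f g)"
proof
  fix r
  have S: "{(p, p'). twist f p \<noteq> 0 \<and> twist g p' \<noteq> 0 \<and> pmul m p p' = Some r} =
           {(p, p'). f p \<noteq> 0 \<and> g p' \<noteq> 0 \<and> pmul m p p' = Some r}"
    by (auto simp: twist_def)
  show "conv m (twist f) (twist g) r = twist (conv m f g) r"
    unfolding conv_def twist_def S sum_distrib_left
    by (intro sum.cong refl) (auto simp: pmul_Some cat_def plen_def power_add)
qed

lemma twist_lin: "twist (\<lambda>r. a * f r + b * g r) = (\<lambda>r. a * twist f r + b * twist g r)"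
  by (auto simp: twist_def algebra_simps)

lemma twist_pv: "twist (pv p) = (\<lambda>r. (-1) ^ plen p * pv p r)"
  by (auto simp: twist_def pv_def)

lemma twist_relE: "twist (relE m q i) = relE m q i"
  by (auto simp: twist_def relE_def plen_def)

lemma twist_relgen:
  "twist (relgen m q p i p') = (\<lambda>r. (-1) ^ (plen p + plen p') * relgen m q p i p' r)"
proof -
  have "twist (relgen m q p i p') = conv m (conv m (twist (pv p)) (relE m q i)) (twist (pv p'))"
    by (metis twist_conv twist_relE)
  also have "\<dots> = (\<lambda>r. (-1) ^ (plen p + plen p') * relgen m q p i p' r)"
    by (simp add: twist_pv conv_smul_left conv_smul_right finsupp_relE finsupp_conv finsupp_smul
        power_add mult.assoc)
  finally show ?thesis .
qed

lemma IdE_twist: "x \<in> IdE m q \<Longrightarrow> twist x \<in> IdE m q"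
proof (induction x rule: IdE.induct)
  case zero thus ?case by (simp add: twist_def IdE.zero)
next
  case (step y p p' i c)
  have "twist (\<lambda>r. y r + c * relgen m q p i p' r) =
        (\<lambda>r. twist y r + (c * (-1) ^ (plen p + plen p')) * relgen m q p i p' r)"
    using twist_lin[of 1 y c "relgen m q p i p'"] by (simp add: twist_relgen algebra_simps)
  moreover have "(\<lambda>r. twist y r + (c * (-1) ^ (plen p + plen p')) * relgen m q p i p' r) \<in> IdE m q"
    by (rule IdE.step) (use step in auto)
  ultimately show ?case by simp
qed

lemma twist_congruent_len_hom:
  assumes "len_hom m q n x"
  shows "(\<lambda>r. twist x r - (-1) ^ n * x r) \<in> IdE m q"
proof -
  obtain y where y: "(\<lambda>r. x r - y r) \<in> IdE m q" "\<forall>p. y p \<noteq> 0 \<longrightarrow> plen p = n"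
    using assms unfolding len_hom_def by blast
  have twy: "twist y = (\<lambda>r. (-1) ^ n * y r)"
    using y(2) by (auto simp: twist_def fun_eq_iff)
  have "(\<lambda>r. 1 * twist (\<lambda>r. x r - y r) r + (- ((-1) ^ n)) * (x r - y r)) \<in> IdE m q"
    by (intro IdE_lin IdE_twist y(1))
  moreover have "(\<lambda>r. 1 * twist (\<lambda>r. x r - y r) r + (- ((-1) ^ n)) * (x r - y r)) =
                 (\<lambda>r. twist x r - (-1) ^ n * x r)"
    using twy twist_lin[of 1 x "-1" y] by (auto simp: fun_eq_iff algebra_simps)
  ultimately show ?thesis by simp
qed

definition unit_KQ :: "nat \<Rightarrow> path \<Rightarrow> 'k::field" where
  "unit_KQ m = (\<lambda>r. \<Sum>i<m. pv (i, []) r)"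

lemma unit_KQ_supp: "(unit_KQ m p :: 'k::field) \<noteq> 0 \<Longrightarrow> snd p = [] \<and> fst p < m"
proof (rule ccontr)
  assume a: "(unit_KQ m p :: 'k) \<noteq> 0" "\<not> (snd p = [] \<and> fst p < m)"
  have "(unit_KQ m p :: 'k) = 0"
    unfolding unit_KQ_def by (rule sum.neutral) (use a(2) in \<open>auto simp: pv_def\<close>)
  thus False using a(1) by simp
qed

lemma twist_unit: "twist (unit_KQ m :: path \<Rightarrow> 'k::field) = unit_KQ m"
  using unit_KQ_supp by (fastforce simp: twist_def plen_def fun_eq_iff)

lemma endpt_lt: "valid_walk m v w \<Longrightarrow> endpt m v w < m"
  by (induction m v w rule: valid_walk.induct) auto

lemma conv_unit_left: "valid_path m a \<Longrightarrow> conv m (unit_KQ m) (pv a) = (pv a :: path \<Rightarrow> 'k::field)"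
proof -
  assume "valid_path m a"
  hence "fst a < m" by (simp add: valid_path_def valid_walk_lt)
  have "conv m (unit_KQ m) (pv a) = (\<lambda>r. \<Sum>i<m. conv m (pv (i, [])) (pv a :: path \<Rightarrow> 'k) r)"
    unfolding unit_KQ_def by (rule conv_sum_left) auto
  also have "\<dots> = (\<lambda>r. \<Sum>i<m. if i = fst a then pv a r else 0)"
    by (intro ext sum.cong refl) (cases a, simp add: conv_pv_pv cat_def)
  also have "\<dots> = pv a" using \<open>fst a < m\<close> by (simp add: sum.delta')
  finally show ?thesis .
qed

lemma conv_unit_right: "valid_path m a \<Longrightarrow> conv m (pv a) (unit_KQ m) = (pv a :: path \<Rightarrow> 'k::field)"
proof -
  assume "valid_path m a"
  hence e: "endpt m (fst a) (snd a) < m" by (simp add: valid_path_def endpt_lt)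
  have "conv m (pv a) (unit_KQ m) = (\<lambda>r. \<Sum>i<m. conv m (pv a :: path \<Rightarrow> 'k) (pv (i, [])) r)"
    unfolding unit_KQ_def by (rule conv_sum_right) auto
  also have "\<dots> = (\<lambda>r. \<Sum>i<m. if endpt m (fst a) (snd a) = i then pv a r else 0)"
    by (intro ext sum.cong refl) (cases a, simp add: conv_pv_pv cat_def)
  also have "\<dots> = pv a" using e by (simp add: sum.delta)
  finally show ?thesis .
qed

lemma KQ_unit: "(unit_KQ m :: path \<Rightarrow> 'k::field) \<in> KQ m"
proof -
  have "finsupp (unit_KQ m :: path \<Rightarrow> 'k)"
    unfolding unit_KQ_def by (rule finsupp_sum) auto
  thus ?thesis using unit_KQ_supp by (fastforce simp: KQ_iff supp_def valid_path_def)
qed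

text \<open>For an element of
  length n this is graded commutation with the arrows; unlike graded centrality itself, it is
  preserved by all the operations generating Zgr.\<close>
definition twisted_central :: "nat \<Rightarrow> (nat \<Rightarrow> 'k::field) \<Rightarrow> (path \<Rightarrow> 'k) \<Rightarrow> bool" where
  "twisted_central m q x \<longleftrightarrow> x \<in> KQ m \<and> (\<forall>a. valid_path m a \<and> plen a = 1 \<longrightarrow>
      (\<lambda>r. conv m x (pv a) r - conv m (pv a) (twist x) r) \<in> IdE m q)"

lemma twisted_central_gen:
  assumes x: "x \<in> KQ m" "len_hom m q n x"
    and comm: "\<And>g k. g \<in> KQ m \<Longrightarrow> (\<forall>p. g p \<noteq> 0 \<longrightarrow> plen p = k) \<Longrightarrow>
            (\<lambda>r. conv m x g r - (-1) ^ (n * k) * conv m g x r) \<in> IdE m q"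
  shows "twisted_central m q x"
  unfolding twisted_central_def
proof (intro conjI allI impI)
  fix a assume a: "valid_path m a \<and> plen a = 1"
  have pa: "pv a \<in> KQ m" using a by (simp add: KQ_pv)
  have H: "(\<lambda>r. conv m x (pv a) r - (-1) ^ (n * 1) * conv m (pv a) x r) \<in> IdE m q"
    by (rule comm[OF pa]) (use a in \<open>auto simp: pv_def\<close>)
  have D: "conv m (pv a) (\<lambda>r. twist x r - (-1) ^ n * x r) \<in> IdE m q"
    by (rule IdE_mult_left[OF twist_congruent_len_hom[OF x(2)] pa])
  have "conv m (pv a) (\<lambda>r. twist x r - (-1) ^ n * x r) =
        (\<lambda>r. 1 * conv m (pv a) (twist x) r + (- ((-1) ^ n)) * conv m (pv a) x r)"
    using conv_lin_right[of "twist x" x "pv a" m 1 "- ((-1) ^ n)"] KQ_finsupp[OF x(1)] by simp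
  with IdE_diff[OF H D]
  show "(\<lambda>r. conv m x (pv a) r - conv m (pv a) (twist x) r) \<in> IdE m q"
    by (simp add: algebra_simps)
qed (fact x)

lemma twisted_central_unit: "twisted_central m q (unit_KQ m)"
  by (auto simp: twisted_central_def KQ_unit twist_unit conv_unit_left conv_unit_right IdE.zero)

lemma twisted_central_add:
  assumes "twisted_central m q x" "twisted_central m q y"
  shows "twisted_central m q (\<lambda>r. x r + y r)"
proof -
  have kx: "x \<in> KQ m" and ky: "y \<in> KQ m" using assms by (auto simp: twisted_central_def)
  have t: "twist (\<lambda>r. x r + y r) = (\<lambda>r. twist x r + twist y r)"
    by (auto simp: twist_def algebra_simps)
  show ?thesis unfolding twisted_central_def
  proof (intro conjI allI impI KQ_add kx ky)
    fix a assume "valid_path m a \<and> plen a = 1"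
    with assms have "(\<lambda>r. conv m x (pv a) r - conv m (pv a) (twist x) r) \<in> IdE m q"
      and "(\<lambda>r. conv m y (pv a) r - conv m (pv a) (twist y) r) \<in> IdE m q"
      unfolding twisted_central_def by blast+
    from IdE_add[OF this(2,1)] kx ky
    show "(\<lambda>r. conv m (\<lambda>r. x r + y r) (pv a) r - conv m (pv a) (twist (\<lambda>r. x r + y r)) r) \<in> IdE m q"
      by (simp add: t conv_add_left conv_add_right KQ_finsupp algebra_simps)
  qed
qed

lemma twisted_central_smul:
  assumes "twisted_central m q x"
  shows "twisted_central m q (\<lambda>r. c * x r)"
proof -
  have kx: "x \<in> KQ m" using assms by (auto simp: twisted_central_def)
  have t: "twist (\<lambda>r. c * x r) = (\<lambda>r. c * twist x r)" by (auto simp: twist_def algebra_simps)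
  show ?thesis unfolding twisted_central_def
  proof (intro conjI allI impI KQ_smul kx)
    fix a assume "valid_path m a \<and> plen a = 1"
    with assms have "(\<lambda>r. conv m x (pv a) r - conv m (pv a) (twist x) r) \<in> IdE m q"
      unfolding twisted_central_def by blast
    from IdE_smul[OF this, of c] kx
    show "(\<lambda>r. conv m (\<lambda>r. c * x r) (pv a) r - conv m (pv a) (twist (\<lambda>r. c * x r)) r) \<in> IdE m q"
      by (simp add: t conv_smul_left conv_smul_right KQ_finsupp algebra_simps)
  qed
qed

text \<open>Twisted centrality is multiplicative since twist is an algebra automorphism:
  x y a = x a twist(y) = a twist(x) twist(y) = a twist(x y).\<close>
lemma twisted_central_mul:
  assumes "twisted_central m q x" "twisted_central m q y"
  shows "twisted_central m q (conv m x y)"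
proof -
  have kx: "x \<in> KQ m" and ky: "y \<in> KQ m" using assms by (auto simp: twisted_central_def)
  have fx: "finsupp x" and fy: "finsupp y" using kx ky by (auto simp: KQ_finsupp)
  show ?thesis unfolding twisted_central_def
  proof (intro conjI allI impI KQ_conv kx ky)
    fix a assume a: "valid_path m a \<and> plen a = 1"
    define Dx where "Dx = (\<lambda>r. conv m x (pv a) r - conv m (pv a) (twist x) r)"
    define Dy where "Dy = (\<lambda>r. conv m y (pv a) r - conv m (pv a) (twist y) r)"
    have "Dx \<in> IdE m q" and "Dy \<in> IdE m q"
      using assms a unfolding twisted_central_def Dx_def Dy_def by blast+
    hence "(\<lambda>r. conv m x Dy r + conv m Dx (twist y) r) \<in> IdE m q"
      by (intro IdE_add IdE_mult_left IdE_mult_right kx KQ_twist ky)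
    moreover have "conv m x Dy = (\<lambda>r. conv m (conv m x y) (pv a) r - conv m (conv m x (pv a)) (twist y) r)"
      unfolding Dy_def using fx fy
      by (subst conv_diff_right) (auto intro: finsupp_conv simp: conv_assoc)
    moreover have "conv m Dx (twist y) =
        (\<lambda>r. conv m (conv m x (pv a)) (twist y) r - conv m (pv a) (twist (conv m x y)) r)"
      unfolding Dx_def using fx fy
      by (subst conv_diff_left) (auto intro: finsupp_conv simp: conv_assoc twist_conv)
    ultimately show "(\<lambda>r. conv m (conv m x y) (pv a) r - conv m (pv a) (twist (conv m x y)) r) \<in> IdE m q"
      by simp
  qed
qed

lemma twisted_central_cong:
  assumes "twisted_central m q x" "y \<in> KQ m" and D: "(\<lambda>r. x r - y r) \<in> IdE m q"
  shows "twisted_central m q y"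
  unfolding twisted_central_def
proof (intro conjI allI impI)
  have kx: "x \<in> KQ m" using assms by (auto simp: twisted_central_def)
  fix a assume a: "valid_path m a \<and> plen a = 1"
  have pa: "pv a \<in> KQ m" using a by (simp add: KQ_pv)
  have Ix: "(\<lambda>r. conv m x (pv a) r - conv m (pv a) (twist x) r) \<in> IdE m q"
    using assms a unfolding twisted_central_def by blast
  have I1: "conv m (\<lambda>r. x r - y r) (pv a) \<in> IdE m q" by (rule IdE_mult_right[OF D pa])
  have I2: "conv m (pv a) (twist (\<lambda>r. x r - y r)) \<in> IdE m q"
    by (rule IdE_mult_left[OF IdE_twist[OF D] pa])
  have t: "twist (\<lambda>r. x r - y r) = (\<lambda>r. twist x r - twist y r)" by (auto simp: twist_def algebra_simps)
  from IdE_add[OF I2 IdE_diff[OF Ix I1]] kx \<open>y \<in> KQ m\<close>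
  show "(\<lambda>r. conv m y (pv a) r - conv m (pv a) (twist y) r) \<in> IdE m q"
    by (simp add: t conv_diff_left conv_diff_right KQ_finsupp algebra_simps)
qed (fact \<open>y \<in> KQ m\<close>)

lemma Zgr_twisted_central: "x \<in> Zgr m q \<Longrightarrow> twisted_central m q x"
proof (induction x rule: Zgr.induct)
  case (gen x n) thus ?case by (rule twisted_central_gen)
next
  case one thus ?case using twisted_central_unit by (simp add: unit_KQ_def)
next
  case (add x y) show ?case using add.IH by (rule twisted_central_add)
next
  case (mul x y) show ?case using mul.IH by (rule twisted_central_mul)
next
  case (smul x c) show ?case using smul.IH by (rule twisted_central_smul)
next
  case (cong x y) thus ?case using twisted_central_cong by blast
qed

section \<open>Walks as words in forward and backward steps\<close>

text \<open>A walk is determined by its start vertex and its shape: the word recording which steps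
  are forward arrows a_j (True) and which are backward arrows a-bar_j (False).\<close>
definition isA :: "arr \<Rightarrow> bool" where
  "isA x = (case x of A _ \<Rightarrow> True | B _ \<Rightarrow> False)"

abbreviation shape :: "arr list \<Rightarrow> bool list" where
  "shape w \<equiv> map isA w"

abbreviation ntrue :: "bool list \<Rightarrow> nat" where
  "ntrue bs \<equiv> length (filter (\<lambda>x. x) bs)"

abbreviation nfalse :: "bool list \<Rightarrow> nat" where
  "nfalse bs \<equiv> length (filter Not bs)"

text \<open>The vertex reached from v after a forward and b backward steps, i.e. v + a - b mod m.\<close>
definition vert :: "nat \<Rightarrow> nat \<Rightarrow> nat \<Rightarrow> nat \<Rightarrow> nat" where
  "vert m v a b = (v + a + b * (m - 1)) mod m"

abbreviation pred_mod :: "nat \<Rightarrow> nat \<Rightarrow> nat" where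
  "pred_mod m v \<equiv> (v + m - Suc 0) mod m"

fun walk_of :: "nat \<Rightarrow> nat \<Rightarrow> bool list \<Rightarrow> arr list" where
  "walk_of m v [] = []"
| "walk_of m v (True # bs) = A v # walk_of m (Suc v mod m) bs"
| "walk_of m v (False # bs) = B (pred_mod m v) # walk_of m (pred_mod m v) bs"

lemma Suc_pred_mod: "v < m \<Longrightarrow> Suc (pred_mod m v) mod m = v"
  by (simp add: mod_Suc_eq)

lemma pred_mod_Suc:
  assumes "v < m"
  shows "pred_mod m (Suc v mod m) = v"
proof -
  have "pred_mod m (Suc v mod m) = (Suc v mod m + (m - Suc 0)) mod m" using assms by simp
  also have "\<dots> = (Suc v + (m - Suc 0)) mod m" by (simp add: mod_add_left_eq)
  also have "Suc v + (m - Suc 0) = v + m" using assms by simp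
  finally show ?thesis using assms by simp
qed

lemma valid_walk_eq_walk_of: "valid_walk m v w \<Longrightarrow> w = walk_of m v (shape w)"
proof (induction w arbitrary: v)
  case Nil thus ?case by simp
next
  case (Cons x w)
  show ?case
  proof (cases x)
    case (A j) thus ?thesis using Cons by (auto simp: isA_def)
  next
    case (B j)
    hence j: "j < m" "Suc j mod m = v" using Cons by auto
    hence "pred_mod m v = j" using pred_mod_Suc by blast
    thus ?thesis using Cons B by (auto simp: isA_def)
  qed
qed

lemma shape_walk_of[simp]: "shape (walk_of m v bs) = bs"
  by (induction m v bs rule: walk_of.induct) (auto simp: isA_def)

lemma valid_walk_walk_of: "v < m \<Longrightarrow> valid_walk m v (walk_of m v bs)"
  by (induction m v bs rule: walk_of.induct) (auto simp: Suc_pred_mod)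

lemma walk_of_append:
  "walk_of m v (xs @ ys) = walk_of m v xs @ walk_of m (endpt m v (walk_of m v xs)) ys"
  by (induction m v xs rule: walk_of.induct) auto

lemma vert_Suc: "m > 0 \<Longrightarrow> vert m (Suc v mod m) a b = vert m v (Suc a) b"
proof -
  have "(Suc v mod m + (a + b * (m - 1))) mod m = (Suc v + (a + b * (m - 1))) mod m"
    by (rule mod_add_left_eq)
  thus ?thesis unfolding vert_def by (simp add: add.assoc)
qed

lemma vert_pred_mod: "m > 0 \<Longrightarrow> vert m (pred_mod m v) a b = vert m v a (Suc b)"
proof -
  assume m: "m > 0"
  have "((v + m - Suc 0) mod m + (a + b * (m - 1))) mod m = ((v + m - Suc 0) + (a + b * (m - 1))) mod m"
    by (rule mod_add_left_eq)
  hence "vert m (pred_mod m v) a b = ((v + m - Suc 0) + a + b * (m - 1)) mod m"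
    unfolding vert_def by (simp add: add.assoc)
  also have "(v + m - Suc 0) + a + b * (m - 1) = v + a + Suc b * (m - 1)" using m by simp
  finally show ?thesis by (simp add: vert_def)
qed

lemma endpt_walk_of: "v < m \<Longrightarrow> endpt m v (walk_of m v bs) = vert m v (ntrue bs) (nfalse bs)"
proof (induction m v bs rule: walk_of.induct)
  case (1 m v) thus ?case by (simp add: vert_def)
next
  case (2 m v bs) thus ?case by (simp add: vert_Suc)
next
  case (3 m v bs) thus ?case by (simp add: vert_pred_mod)
qed

text \<open>In E, a-bar_(i-1) a_(i-1) = -q_i^(-1) a_i a-bar_i at every vertex i.  Sorting the shape of a
  walk into "all forward steps first" by adjacent swaps therefore produces a scalar:
  swap_coeff collects, for each forward step, the factors for moving it past the nb backward
  steps preceding it (na forward steps having already been sorted).\<close>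
fun swap_coeff :: "nat \<Rightarrow> (nat \<Rightarrow> 'k::field) \<Rightarrow> nat \<Rightarrow> nat \<Rightarrow> nat \<Rightarrow> bool list \<Rightarrow> 'k" where
  "swap_coeff m q v na nb [] = 1"
| "swap_coeff m q v na nb (True # xs) =
     (\<Prod>b<nb. inverse (- q (vert m v na b))) * swap_coeff m q v (Suc na) nb xs"
| "swap_coeff m q v na nb (False # xs) = swap_coeff m q v na (Suc nb) xs"

lemma swap_coeff_swap: "swap_coeff m q v na nb (xs @ False # True # ys) =
   inverse (- q (vert m v (na + ntrue xs) (nb + nfalse xs))) * swap_coeff m q v na nb (xs @ True # False # ys)"
proof (induction xs arbitrary: na nb)
  case Nil thus ?case by (simp add: mult.assoc)
next
  case (Cons x xs)
  show ?case by (cases x) (simp_all add: Cons mult.left_commute)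
qed

lemma swap_coeff_falses: "swap_coeff m q v na nb (replicate b False) = 1"
  by (induction b arbitrary: nb) auto

lemma swap_coeff_sorted: "swap_coeff m q v na 0 (replicate a True @ replicate b False) = 1"
  by (induction a arbitrary: na) (auto simp: swap_coeff_falses)

text \<open>The number of inversions (a backward step before a forward one): the induction measure for
  sorting.\<close>
fun inversions :: "bool list \<Rightarrow> nat" where
  "inversions [] = 0"
| "inversions (True # xs) = inversions xs"
| "inversions (False # xs) = ntrue xs + inversions xs"

lemma inversions_swap:
  "inversions (xs @ False # True # ys) = Suc (inversions (xs @ True # False # ys))"
proof (induction xs)
  case Nil thus ?case by simp
next
  case (Cons x xs) thus ?case by (cases x) auto
qed

lemma no_inversion_sorted_ex:
  "(\<forall>xs ys. bs \<noteq> xs @ False # True # ys) \<Longrightarrow> \<exists>a b. bs = replicate a True @ replicate b False"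
proof (induction bs)
  case Nil thus ?case by (metis append_Nil replicate_0)
next
  case (Cons x bs)
  have h: "\<forall>xs ys. bs \<noteq> xs @ False # True # ys"
  proof (intro allI notI)
    fix xs ys assume "bs = xs @ False # True # ys"
    hence "x # bs = (x # xs) @ False # True # ys" by simp
    thus False using Cons.prems by blast
  qed
  obtain a b where ab: "bs = replicate a True @ replicate b False" using Cons.IH[OF h] by blast
  show ?case
  proof (cases x)
    case True
    hence "x # bs = replicate (Suc a) True @ replicate b False" using ab by simp
    thus ?thesis by blast
  next
    case False
    have "a = 0"
    proof (rule ccontr)
      assume "a \<noteq> 0"
      then obtain k where "a = Suc k" by (cases a) auto
      hence "x # bs = [] @ False # True # (replicate k True @ replicate b False)"
        using False ab by simp
      thus False using Cons.prems by blast
    qed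
    hence "x # bs = replicate 0 True @ replicate (Suc b) False" using ab False by simp
    thus ?thesis by blast
  qed
qed

lemma no_inversion_sorted:
  "(\<forall>xs ys. bs \<noteq> xs @ False # True # ys) \<Longrightarrow> bs = replicate (ntrue bs) True @ replicate (nfalse bs) False"
proof -
  assume "\<forall>xs ys. bs \<noteq> xs @ False # True # ys"
  then obtain a b where ab: "bs = replicate a True @ replicate b False" using no_inversion_sorted_ex by blast
  have "ntrue (replicate a True @ replicate b False) = a" "nfalse (replicate a True @ replicate b False) = b"
    by (simp_all add: filter_replicate)
  thus ?thesis using ab by simp
qed

section \<open>A linear functional vanishing on IdE: coefficients in the normal form\<close>

lemma relE_lin:
  "relE m q i = (\<lambda>r. inverse (q i) * pv (i, [A i, B i]) r + 1 * pv (i, [B (pred_mod m i), A (pred_mod m i)]) r)"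
  by (auto simp: relE_def pv_def fun_eq_iff)

lemma relgen_explicit:
  assumes i: "i < m"
  shows "relgen m q p i p' = (if endpt m (fst p) (snd p) = i \<and> fst p' = i then
     (\<lambda>r. inverse (q i) * pv (fst p, snd p @ [A i, B i] @ snd p') r
          + 1 * pv (fst p, snd p @ [B (pred_mod m i), A (pred_mod m i)] @ snd p') r)
     else (\<lambda>_. 0))"
proof -
  let ?P1 = "(i, [A i, B i])" and ?P2 = "(i, [B (pred_mod m i), A (pred_mod m i)])"
  have c1: "conv m (pv p) (relE m q i) =
            (\<lambda>r. inverse (q i) * conv m (pv p) (pv ?P1) r + 1 * conv m (pv p) (pv ?P2) r)"
    unfolding relE_lin by (rule conv_lin_right) auto
  show ?thesis
  proof (cases "endpt m (fst p) (snd p) = i")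
    case False
    thus ?thesis unfolding c1 by (simp add: conv_pv_pv)
  next
    case True
    have "conv m (pv p) (relE m q i) = (\<lambda>r. inverse (q i) * pv (cat p ?P1) r + 1 * pv (cat p ?P2) r)"
      unfolding c1 using True by (simp add: conv_pv_pv)
    hence "relgen m q p i p' =
          (\<lambda>r. inverse (q i) * conv m (pv (cat p ?P1)) (pv p') r + 1 * conv m (pv (cat p ?P2)) (pv p') r)"
      by (simp only:) (rule conv_lin_left, auto)
    moreover have "endpt m (fst (cat p ?P1)) (snd (cat p ?P1)) = i"
      and "endpt m (fst (cat p ?P2)) (snd (cat p ?P2)) = i"
      using True i by (simp_all add: cat_def endpt_append Suc_pred_mod)
    ultimately show ?thesis using True by (auto simp: conv_pv_pv cat_def fun_eq_iff)
  qed
qed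

lemma relgen_walk_of:
  assumes v: "v < m" and i: "i = vert m v (ntrue xs) (nfalse xs)"
  shows "relgen m q (v, walk_of m v xs) i (i, walk_of m i ys) =
    (\<lambda>r. inverse (q i) * pv (v, walk_of m v (xs @ True # False # ys)) r
         + 1 * pv (v, walk_of m v (xs @ False # True # ys)) r)"
proof -
  have im: "i < m" using v by (simp add: i vert_def)
  have ei: "endpt m v (walk_of m v xs) = i" using endpt_walk_of[OF v] by (simp add: i)
  have "walk_of m v (xs @ True # False # ys) = walk_of m v xs @ [A i, B i] @ walk_of m i ys"
    using ei im by (simp add: walk_of_append pred_mod_Suc)
  moreover have "walk_of m v (xs @ False # True # ys) =
                 walk_of m v xs @ [B (pred_mod m i), A (pred_mod m i)] @ walk_of m i ys"
    using ei im by (simp add: walk_of_append Suc_pred_mod)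
  ultimately show ?thesis using ei by (simp add: relgen_explicit[OF im])
qed

text \<open>The weight of a path in the normal-form coefficient at (v, s, t): the scalar by which
  the path is congruent to the sorted path  gamma_v^s delta^t, if it starts at v and has s
  forward and t backward steps; zero otherwise.\<close>
definition nf_weight :: "nat \<Rightarrow> (nat \<Rightarrow> 'k::field) \<Rightarrow> nat \<Rightarrow> nat \<Rightarrow> nat \<Rightarrow> path \<Rightarrow> 'k" where
  "nf_weight m q v s t p = (if fst p = v \<and> ntrue (shape (snd p)) = s \<and> nfalse (shape (snd p)) = t
                            then swap_coeff m q v 0 0 (shape (snd p)) else 0)"

definition nf_coeff :: "nat \<Rightarrow> (nat \<Rightarrow> 'k::field) \<Rightarrow> nat \<Rightarrow> nat \<Rightarrow> nat \<Rightarrow> (path \<Rightarrow> 'k) \<Rightarrow> 'k" where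
  "nf_coeff m q v s t x = (\<Sum>p\<in>supp x. x p * nf_weight m q v s t p)"

lemma nf_coeff_superset:
  "finite S \<Longrightarrow> supp x \<subseteq> S \<Longrightarrow> nf_coeff m q v s t x = (\<Sum>p\<in>S. x p * nf_weight m q v s t p)"
  unfolding nf_coeff_def by (rule sum.mono_neutral_left) (auto simp: supp_def)

lemma nf_coeff_lin:
  assumes "finsupp x" "finsupp y"
  shows "nf_coeff m q v s t (\<lambda>r. a * x r + b * y r) = a * nf_coeff m q v s t x + b * nf_coeff m q v s t y"
proof -
  let ?S = "supp x \<union> supp y"
  have "supp (\<lambda>r. a * x r + b * y r) \<subseteq> ?S" by (auto simp: supp_def)
  with assms show ?thesis
    by (simp add: nf_coeff_superset[of ?S] sum_distrib_left sum.distrib[symmetric] algebra_simps)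
qed

lemma nf_coeff_zero [simp]: "nf_coeff m q v s t (\<lambda>_. 0) = 0"
  by (simp add: nf_coeff_def supp_def)

lemma nf_coeff_pv: "nf_coeff m q v s t (pv P) = nf_weight m q v s t P"
  by (simp add: nf_coeff_def) (simp add: pv_def)

lemma nf_coeff_smul: "finsupp x \<Longrightarrow> nf_coeff m q w s t (\<lambda>r. c * x r) = c * nf_coeff m q w s t x"
  using nf_coeff_lin[of x x m q w s t c 0] by simp

lemma nf_coeff_sum:
  "finite S \<Longrightarrow> (\<And>v. v \<in> S \<Longrightarrow> finsupp (F v)) \<Longrightarrow>
   nf_coeff m q w s t (\<lambda>r. \<Sum>v\<in>S. F v r) = (\<Sum>v\<in>S. nf_coeff m q w s t (F v))"
proof (induction S rule: finite_induct)
  case empty thus ?case by simp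
next
  case (insert x S)
  have "nf_coeff m q w s t (\<lambda>r. 1 * F x r + 1 * (\<Sum>v\<in>S. F v r)) =
        1 * nf_coeff m q w s t (F x) + 1 * nf_coeff m q w s t (\<lambda>r. \<Sum>v\<in>S. F v r)"
    by (rule nf_coeff_lin) (use insert in \<open>auto intro: finsupp_sum\<close>)
  thus ?case using insert by simp
qed

lemma nf_coeff_lincomb:
  "(\<And>v. finsupp (G v)) \<Longrightarrow>
   nf_coeff m q w s t (\<lambda>r. \<Sum>v<(k::nat). C v * G v r) = (\<Sum>v<k. C v * nf_coeff m q w s t (G v))"
  by (subst nf_coeff_sum) (auto intro: finsupp_smul simp: nf_coeff_smul)

lemma nf_coeff_relgen:
  assumes vp: "valid_path m p" "valid_path m p'" and i: "i < m"
  shows "nf_coeff m q v s t (relgen m q p i p') = 0"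
proof (cases "endpt m (fst p) (snd p) = i \<and> fst p' = i")
  case False thus ?thesis by (subst relgen_explicit[OF i]) (simp only: if_not_P[OF False] if_False nf_coeff_zero)
next
  case True
  let ?u = "fst p" and ?xs = "shape (snd p)" and ?ys = "shape (snd p')"
  have u: "?u < m" using vp by (simp add: valid_path_def valid_walk_lt)
  have p: "p = (?u, walk_of m ?u ?xs)"
    using vp(1) valid_walk_eq_walk_of by (metis valid_path_def prod.collapse)
  have p': "p' = (i, walk_of m i ?ys)"
    using vp(2) True valid_walk_eq_walk_of by (metis valid_path_def prod.collapse)
  have ve: "i = vert m ?u (ntrue ?xs) (nfalse ?xs)"
    using True endpt_walk_of[OF u, of ?xs] p by (metis fst_conv snd_conv)
  have sw: "swap_coeff m q ?u 0 0 (?xs @ False # True # ?ys) =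
            inverse (- q i) * swap_coeff m q ?u 0 0 (?xs @ True # False # ?ys)"
    using swap_coeff_swap[of m q ?u 0 0 ?xs ?ys] ve by simp
  have "nf_coeff m q v s t (relgen m q p i p') =
        inverse (q i) * nf_weight m q v s t (?u, walk_of m ?u (?xs @ True # False # ?ys))
        + 1 * nf_weight m q v s t (?u, walk_of m ?u (?xs @ False # True # ?ys))"
    by (subst p, subst p', subst relgen_walk_of[OF u ve], subst nf_coeff_lin) (simp_all add: nf_coeff_pv)
  also have "\<dots> = 0"
    using sw by (cases "?u = v") (auto simp: nf_weight_def isA_def inverse_minus_eq)
  finally show ?thesis .
qed

lemma nf_coeff_IdE: "x \<in> IdE m q \<Longrightarrow> nf_coeff m q v s t x = 0"
proof (induction x rule: IdE.induct)
  case zero thus ?case by simp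
next
  case (step y p p' i c)
  have "nf_coeff m q v s t (\<lambda>r. 1 * y r + c * relgen m q p i p' r) =
        1 * nf_coeff m q v s t y + c * nf_coeff m q v s t (relgen m q p i p')"
    by (rule nf_coeff_lin) (auto intro: IdE_finsupp[OF step(1)] finsupp_relgen)
  moreover have "nf_coeff m q v s t (relgen m q p i p') = 0"
    by (rule nf_coeff_relgen) (use step in auto)
  ultimately show ?case using step by simp
qed

abbreviation sorted_shape :: "bool list \<Rightarrow> bool list" where
  "sorted_shape bs \<equiv> replicate (ntrue bs) True @ replicate (nfalse bs) False"

lemma path_congruent_nf:
  assumes v: "v < m"
  shows "(\<lambda>r. pv (v, walk_of m v bs) r - swap_coeff m q v 0 0 bs * pv (v, walk_of m v (sorted_shape bs)) r)
           \<in> IdE m q"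
proof (induction "inversions bs" arbitrary: bs rule: less_induct)
  case less
  show ?case
  proof (cases "\<exists>xs ys. bs = xs @ False # True # ys")
    case False
    hence "sorted_shape bs = bs" using no_inversion_sorted by metis
    moreover from this have "swap_coeff m q v 0 0 bs = 1" by (metis swap_coeff_sorted)
    ultimately show ?thesis by (simp add: IdE.zero)
  next
    case True
    then obtain xs ys where bs: "bs = xs @ False # True # ys" by blast
    define bs' where "bs' = xs @ True # False # ys"
    define i where "i = vert m v (ntrue xs) (nfalse xs)"
    have im: "i < m" using v by (simp add: i_def vert_def)
    have lt: "inversions bs' < inversions bs" unfolding bs bs'_def by (simp add: inversions_swap)
    have "sorted_shape bs' = sorted_shape bs" unfolding bs bs'_def by simp
    with less.hyps[OF lt]
    have IH: "(\<lambda>r. pv (v, walk_of m v bs') r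
                - swap_coeff m q v 0 0 bs' * pv (v, walk_of m v (sorted_shape bs)) r) \<in> IdE m q"
      by simp
    have k: "swap_coeff m q v 0 0 bs = inverse (- q i) * swap_coeff m q v 0 0 bs'"
      unfolding bs bs'_def i_def using swap_coeff_swap[of m q v 0 0 xs ys] by simp
    have "relgen m q (v, walk_of m v xs) i (i, walk_of m i ys) \<in> IdE m q"
      using v im by (intro IdE_relgen) (simp_all add: valid_path_def valid_walk_walk_of)
    from IdE_lin[OF this IH, of 1 "- inverse (q i)"]
    show ?thesis
      unfolding relgen_walk_of[OF v i_def] bs'_def[symmetric] bs[symmetric] k
      by (simp add: algebra_simps inverse_minus_eq)
  qed
qed

section \<open>Bihomogeneous elements are congruent to combinations of gamma delta\<close>

lemma isA_case: "(\<lambda>x. case x of A _ \<Rightarrow> True | B _ \<Rightarrow> False) = isA"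
  by (auto simp: isA_def fun_eq_iff)

lemma ntrue_shape: "ntrue (shape w) = length (filter isA w)"
  by (simp add: filter_map comp_def)

lemma nfalse_shape: "nfalse (shape w) = length (filter (\<lambda>x. \<not> isA x) w)"
  by (simp add: filter_map comp_def)

lemma zdeg_counts: "zdeg p = int (ntrue (shape (snd p))) - int (nfalse (shape (snd p)))"
proof -
  have "(\<lambda>x. case x of A _ \<Rightarrow> False | B _ \<Rightarrow> True) = (\<lambda>x. \<not> isA x)"
    by (auto simp: isA_def fun_eq_iff split: arr.split)
  thus ?thesis unfolding zdeg_def ntrue_shape nfalse_shape isA_case by simp
qed

lemma plen_counts: "plen p = ntrue (shape (snd p)) + nfalse (shape (snd p))"
  unfolding plen_def ntrue_shape nfalse_shape by (simp add: sum_length_filter_compl)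

text \<open>The sorted path from v with s forward and t backward steps, i.e. gamma_v^s delta^t.\<close>
definition nf_path :: "nat \<Rightarrow> nat \<Rightarrow> nat \<Rightarrow> nat \<Rightarrow> path" where
  "nf_path m s t v = (v, walk_of m v (replicate s True @ replicate t False))"

lemma counts_sorted [simp]:
  "ntrue (replicate s True @ replicate t False) = s" "nfalse (replicate s True @ replicate t False) = t"
  by (simp_all add: filter_replicate)

lemma valid_nf_path: "v < m \<Longrightarrow> valid_path m (nf_path m s t v)"
  by (simp add: nf_path_def valid_path_def valid_walk_walk_of)

lemma plen_nf_path: "plen (nf_path m s t v) = s + t"
  by (metis plen_counts counts_sorted shape_walk_of nf_path_def snd_conv)

definition nf_sum :: "nat \<Rightarrow> nat \<Rightarrow> nat \<Rightarrow> (nat \<Rightarrow> 'k::field) \<Rightarrow> path \<Rightarrow> 'k" where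
  "nf_sum m s t C = (\<lambda>r. \<Sum>v<m. C v * pv (nf_path m s t v) r)"

lemma finsupp_nf_sum: "finsupp (nf_sum m s t C)"
  unfolding nf_sum_def by (rule finsupp_sum) (auto intro: finsupp_smul)

lemma KQ_nf_sum: "nf_sum m s t C \<in> KQ m"
  unfolding nf_sum_def by (rule KQ_lincomb) (rule valid_nf_path)

lemma twist_nf_sum: "twist (nf_sum m s t C) = (\<lambda>r. (-1) ^ (s + t) * nf_sum m s t C r)"
  by (auto simp: fun_eq_iff twist_def nf_sum_def sum_distrib_left pv_def plen_nf_path
      intro!: sum.cong)

lemma path_congruent_nf_path:
  assumes "valid_path m p" "ntrue (shape (snd p)) = s" "nfalse (shape (snd p)) = t"
  shows "(\<lambda>r. pv p r - nf_weight m q (fst p) s t p * pv (nf_path m s t (fst p)) r) \<in> IdE m q"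
proof -
  have "fst p < m" using assms(1) by (simp add: valid_path_def valid_walk_lt)
  from path_congruent_nf[OF this, of "shape (snd p)" q]
  show ?thesis
    using assms valid_walk_eq_walk_of[of m "fst p" "snd p"]
    by (simp add: nf_path_def nf_weight_def valid_path_def)
qed

lemma nf_sum_nf_coeff:
  assumes y: "y \<in> KQ m"
    and cnt: "\<And>p. y p \<noteq> 0 \<Longrightarrow> ntrue (shape (snd p)) = s \<and> nfalse (shape (snd p)) = t"
  shows "nf_sum m s t (\<lambda>v. nf_coeff m q v s t y) r =
         (\<Sum>p\<in>supp y. y p * nf_weight m q (fst p) s t p * pv (nf_path m s t (fst p)) r)"
proof -
  have "nf_sum m s t (\<lambda>v. nf_coeff m q v s t y) r =
        (\<Sum>v<m. \<Sum>p\<in>supp y. if fst p = v then y p * nf_weight m q v s t p * pv (nf_path m s t v) r else 0)"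
    unfolding nf_sum_def nf_coeff_def sum_distrib_right
    by (intro sum.cong refl) (auto simp: nf_weight_def)
  also have "\<dots> = (\<Sum>p\<in>supp y. \<Sum>v<m. if fst p = v then y p * nf_weight m q v s t p * pv (nf_path m s t v) r else 0)"
    by (rule sum.swap)
  also have "\<dots> = (\<Sum>p\<in>supp y. y p * nf_weight m q (fst p) s t p * pv (nf_path m s t (fst p)) r)"
  proof (intro sum.cong refl)
    fix p assume "p \<in> supp y"
    hence "fst p < m" using y valid_walk_lt by (fastforce simp: KQ_iff valid_path_def)
    thus "(\<Sum>v<m. if fst p = v then y p * nf_weight m q v s t p * pv (nf_path m s t v) r else 0) =
          y p * nf_weight m q (fst p) s t p * pv (nf_path m s t (fst p)) r"
      by (simp add: sum.delta)
  qed
  finally show ?thesis .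
qed

lemma homogeneous_congruent_nf_sum:
  assumes y: "y \<in> KQ m"
    and cnt: "\<And>p. y p \<noteq> 0 \<Longrightarrow> ntrue (shape (snd p)) = s \<and> nfalse (shape (snd p)) = t"
  shows "(\<lambda>r. y r - nf_sum m s t (\<lambda>v. nf_coeff m q v s t y) r) \<in> IdE m q"
proof -
  have fy: "finsupp y" using y by (rule KQ_finsupp)
  let ?w = "\<lambda>p. nf_weight m q (fst p) s t p"
  have "(\<lambda>r. \<Sum>p\<in>supp y. y p * (pv p r - ?w p * pv (nf_path m s t (fst p)) r)) \<in> IdE m q"
  proof (rule IdE_sum[OF fy])
    fix p assume p: "p \<in> supp y"
    have "valid_path m p" using y p by (simp add: KQ_iff)
    with p cnt show "(\<lambda>r. y p * (pv p r - ?w p * pv (nf_path m s t (fst p)) r)) \<in> IdE m q"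
      by (intro IdE_smul path_congruent_nf_path) (auto simp: supp_def)
  qed
  moreover have "(\<Sum>p\<in>supp y. y p * pv p r) = y r" for r
    using basis_decomp[OF fy] by metis
  ultimately show ?thesis
    by (simp add: nf_sum_nf_coeff[OF y cnt] right_diff_distrib sum_subtractf mult.assoc)
qed

lemma bihomogeneous_congruent_nf_sum:
  assumes "z \<notin> IdE m q" and "bi_hom m q n d z"
  shows "\<exists>s t C. n = s + t \<and> (\<lambda>r. z r - nf_sum m s t C r) \<in> IdE m q \<and> (\<exists>v<m. C v \<noteq> 0)"
proof -
  obtain y where y: "y \<in> KQ m" "(\<lambda>r. z r - y r) \<in> IdE m q"
      and hom: "\<forall>p. y p \<noteq> 0 \<longrightarrow> plen p = n \<and> zdeg p = d"
    using assms(2) unfolding bi_hom_def by blast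
  obtain p0 where p0: "y p0 \<noteq> 0"
    using y(2) assms(1) by (metis (no_types, lifting) diff_zero ext)
  define s where "s = ntrue (shape (snd p0))"
  define t where "t = nfalse (shape (snd p0))"
  have cnt: "ntrue (shape (snd p)) = s \<and> nfalse (shape (snd p)) = t" if "y p \<noteq> 0" for p
  proof -
    have "plen p = plen p0" "zdeg p = zdeg p0" using hom[rule_format, OF that] hom[rule_format, OF p0] by auto
    thus ?thesis unfolding plen_counts zdeg_counts s_def t_def by linarith
  qed
  define C where "C v = nf_coeff m q v s t y" for v
  have zY: "(\<lambda>r. z r - nf_sum m s t C r) \<in> IdE m q"
    using IdE_add[OF homogeneous_congruent_nf_sum[OF y(1) cnt] y(2)] unfolding C_def by simp
  moreover have "n = s + t" using hom[rule_format, OF p0] by (simp add: plen_counts s_def t_def)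
  moreover have "\<exists>v<m. C v \<noteq> 0"
  proof (rule ccontr)
    assume "\<not> (\<exists>v<m. C v \<noteq> 0)"
    hence "nf_sum m s t C = (\<lambda>_. 0)" by (auto simp: nf_sum_def fun_eq_iff)
    thus False using zY assms(1) by simp
  qed
  ultimately show ?thesis by blast
qed

section \<open>Twisted commutation with the arrows forces two recurrences\<close>

lemma vert_add_back: "m > 0 \<Longrightarrow> (vert m v a b + b) mod m = (v + a) mod m"
proof -
  assume m: "m > 0"
  have "(vert m v a b + b) mod m = (v + a + b * (m - 1) + b) mod m"
    by (simp add: vert_def mod_add_left_eq)
  also have "v + a + b * (m - 1) + b = (v + a) + b * m"
    using m by (cases m) (simp_all add: algebra_simps)
  finally show ?thesis by simp
qed

lemma mod_add_right_cancel_nat: "(x + k) mod m = (y + k) mod m \<longleftrightarrow> x mod m = y mod (m::nat)"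
proof
  assume "(x + k) mod m = (y + k) mod m"
  thus "x mod m = y mod m" by (simp add: nat_mod_eq_iff)
next
  assume "x mod m = y mod m"
  thus "(x + k) mod m = (y + k) mod m" by (metis mod_add_left_eq)
qed

lemma vert_self:
  assumes m: "m > 0" and v: "v < m"
  shows "vert m v s t = v \<longleftrightarrow> s mod m = t mod m"
proof -
  have "vert m v s t = v \<longleftrightarrow> vert m v s t mod m = v mod m" using v by (simp add: vert_def)
  also have "\<dots> \<longleftrightarrow> (vert m v s t + t) mod m = (v + t) mod m" by (rule mod_add_right_cancel_nat[symmetric])
  also have "\<dots> \<longleftrightarrow> (s + v) mod m = (t + v) mod m"
    by (simp only: vert_add_back[OF m] add.commute[of v])
  also have "\<dots> \<longleftrightarrow> s mod m = t mod m" by (rule mod_add_right_cancel_nat)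
  finally show ?thesis .
qed

lemma vert_backward:
  assumes m: "m > 0" and st: "s mod m = t mod m" and b: "b \<le> t"
  shows "vert m i s b = (i + t - b) mod m"
proof -
  have "(vert m i s b + b) mod m = (s + i) mod m"
    by (simp only: vert_add_back[OF m] add.commute[of i])
  also have "\<dots> = (t + i) mod m" using st by (rule mod_add_right_cancel_nat[THEN iffD2])
  also have "t + i = (i + t - b) + b" using b by simp
  finally have "vert m i s b mod m = (i + t - b) mod m" by (rule mod_add_right_cancel_nat[THEN iffD1])
  thus ?thesis by (simp add: vert_def)
qed

lemma swap_coeff_trues:
  "swap_coeff m q v na 0 (replicate k True @ xs) = swap_coeff m q v (na + k) 0 xs"
  by (induction k arbitrary: na) auto

lemma swap_coeff_falses_prefix:
  "swap_coeff m q v na nb (replicate k False @ xs) = swap_coeff m q v na (nb + k) xs"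
  by (induction k arbitrary: nb) auto

lemma swap_coeff_nf_A:
  "swap_coeff m q v 0 0 (replicate s True @ replicate t False @ [True]) = (\<Prod>b<t. inverse (- q (vert m v s b)))"
  by (simp add: swap_coeff_trues swap_coeff_falses_prefix)

lemma swap_coeff_A_nf: "swap_coeff m q v 0 0 (True # replicate s True @ replicate t False) = 1"
  using swap_coeff_sorted[of m q v 0 "Suc s" t] by simp

lemma swap_coeff_nf_B: "swap_coeff m q v 0 0 (replicate s True @ replicate t False @ [False]) = 1"
  using swap_coeff_sorted[of m q v 0 s "Suc t"] by (simp add: replicate_append_same[symmetric])

lemma swap_coeff_one_false:
  "swap_coeff m q v na (Suc 0) (replicate k True @ replicate t False) =
   (\<Prod>a\<in>{na..<na+k}. inverse (- q (vert m v a 0)))"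
proof (induction k arbitrary: na)
  case 0 thus ?case by (simp add: swap_coeff_falses)
next
  case (Suc k)
  have "{na..<na + Suc k} = insert na {Suc na..<Suc na + k}" by auto
  thus ?case using Suc by simp
qed

lemma swap_coeff_B_nf:
  "swap_coeff m q v 0 0 (False # replicate s True @ replicate t False) = (\<Prod>a<s. inverse (- q (vert m v a 0)))"
  using swap_coeff_one_false[of m q v 0 s t] by (simp add: atLeast0LessThan)

lemma finsupp_conv_pv: "finsupp (conv m (pv a) (pv b) :: path \<Rightarrow> 'k::field)"
  by (rule finsupp_conv) auto

lemma conv_nf_sum_left:
  "conv m (nf_sum m s t C) (pv a) = (\<lambda>r. \<Sum>v<m. C v * conv m (pv (nf_path m s t v)) (pv a :: path \<Rightarrow> 'k::field) r)"
  unfolding nf_sum_def by (subst conv_sum_left) (auto intro: finsupp_smul simp: conv_smul_left)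

lemma conv_nf_sum_right:
  "conv m (pv a) (nf_sum m s t C) = (\<lambda>r. \<Sum>v<m. C v * conv m (pv a :: path \<Rightarrow> 'k::field) (pv (nf_path m s t v)) r)"
  unfolding nf_sum_def by (subst conv_sum_right) (auto intro: finsupp_smul simp: conv_smul_right)

lemma twisted_commute_congruent:
  assumes I: "twisted_central m q z" and Y: "Y \<in> KQ m" and D: "(\<lambda>r. z r - Y r) \<in> IdE m q"
    and twY: "twist Y = (\<lambda>r. e * Y r)" and a: "valid_path m a" "plen a = 1"
  shows "(\<lambda>r. conv m Y (pv a) r - e * conv m (pv a) Y r) \<in> IdE m q"
proof -
  have fz: "finsupp z" and fY: "finsupp Y" using I Y by (auto simp: twisted_central_def KQ_finsupp)
  have pa: "pv a \<in> KQ m" using a by (simp add: KQ_pv)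
  have H: "(\<lambda>r. conv m z (pv a) r - conv m (pv a) (twist z) r) \<in> IdE m q"
    using I a unfolding twisted_central_def by blast
  have I1: "conv m (\<lambda>r. z r - Y r) (pv a) \<in> IdE m q" by (rule IdE_mult_right[OF D pa])
  have I2: "conv m (pv a) (twist (\<lambda>r. z r - Y r)) \<in> IdE m q"
    by (rule IdE_mult_left[OF IdE_twist[OF D] pa])
  have t: "twist (\<lambda>r. z r - Y r) = (\<lambda>r. twist z r - e * Y r)"
    using twY by (auto simp: twist_def fun_eq_iff algebra_simps)
  have "conv m (pv a) (\<lambda>r. twist z r - e * Y r) =
        (\<lambda>r. 1 * conv m (pv a) (twist z) r + (- e) * conv m (pv a) Y r)"
    using conv_lin_right[of "twist z" Y "pv a" m 1 "- e"] fz fY by simp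
  with IdE_add[OF I2 IdE_diff[OF H I1]] fz fY show ?thesis
    by (simp add: t conv_diff_left algebra_simps)
qed

lemma nf_sum_commutes_arrows:
  assumes "z \<in> Zgr m q" and "(\<lambda>r. z r - nf_sum m s t C r) \<in> IdE m q"
    and "valid_path m a" "plen a = 1"
  shows "(\<lambda>r. conv m (nf_sum m s t C) (pv a) r - (-1) ^ (s + t) * conv m (pv a) (nf_sum m s t C) r)
           \<in> IdE m q"
  using twisted_commute_congruent[OF Zgr_twisted_central[OF assms(1)] KQ_nf_sum assms(2) twist_nf_sum]
    assms(3,4) .

text \<open>Comparing the coefficients of gamma_j^(s+1) delta^t on both sides of  Y a_j = e a_j Y.\<close>
lemma commute_fwd_arrow_eq:
  fixes C :: "nat \<Rightarrow> 'k::field"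
  assumes m: "m > 0" and j: "j < m"
    and H: "(\<lambda>r. conv m (nf_sum m s t C) (pv (j, [A j])) r - e * conv m (pv (j, [A j])) (nf_sum m s t C) r)
              \<in> IdE m q"
  shows "C j * (if vert m j s t = j then (\<Prod>b<t. inverse (- q (vert m j s b))) else 0)
          - e * C (Suc j mod m) = 0"
proof -
  let ?a = "(j, [A j])" and ?Y = "nf_sum m s t C" and ?nf = "nf_coeff m q j (Suc s) t"
  have "?nf (conv m ?Y (pv ?a)) = (\<Sum>v<m. C v * ?nf (conv m (pv (nf_path m s t v)) (pv ?a)))"
    unfolding conv_nf_sum_left by (rule nf_coeff_lincomb) (rule finsupp_conv_pv)
  also have "\<dots> = (\<Sum>v<m. if v = j then C j * (if vert m j s t = j then (\<Prod>b<t. inverse (- q (vert m j s b))) else 0) else 0)"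
    by (intro sum.cong refl)
       (auto simp: conv_pv_pv endpt_walk_of nf_coeff_pv nf_weight_def cat_def nf_path_def isA_def swap_coeff_nf_A)
  finally have R: "?nf (conv m ?Y (pv ?a)) = C j * (if vert m j s t = j then (\<Prod>b<t. inverse (- q (vert m j s b))) else 0)"
    using j by (simp add: sum.delta')
  have "?nf (conv m (pv ?a) ?Y) = (\<Sum>v<m. C v * ?nf (conv m (pv ?a) (pv (nf_path m s t v))))"
    unfolding conv_nf_sum_right by (rule nf_coeff_lincomb) (rule finsupp_conv_pv)
  also have "\<dots> = (\<Sum>v<m. if v = Suc j mod m then C v else 0)"
    using swap_coeff_A_nf[of m q j s t]
    by (intro sum.cong refl) (auto simp: conv_pv_pv nf_coeff_pv nf_weight_def cat_def nf_path_def isA_def)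
  finally have L: "?nf (conv m (pv ?a) ?Y) = C (Suc j mod m)" using m by (simp add: sum.delta')
  have "?nf (\<lambda>r. 1 * conv m ?Y (pv ?a) r + (- e) * conv m (pv ?a) ?Y r) =
        1 * ?nf (conv m ?Y (pv ?a)) + (- e) * ?nf (conv m (pv ?a) ?Y)"
    by (rule nf_coeff_lin) (auto intro: finsupp_conv finsupp_nf_sum)
  with nf_coeff_IdE[OF H] R L show ?thesis by simp
qed

text \<open>Comparing the coefficients of gamma_(j+1)^s delta^(t+1) on both sides of  Y a-bar_j = e a-bar_j Y.\<close>
lemma commute_bwd_arrow_eq:
  fixes C :: "nat \<Rightarrow> 'k::field"
  assumes m: "m > 0" and j: "j < m"
    and H: "(\<lambda>r. conv m (nf_sum m s t C) (pv (Suc j mod m, [B j])) r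
                - e * conv m (pv (Suc j mod m, [B j])) (nf_sum m s t C) r) \<in> IdE m q"
  shows "C (Suc j mod m) * (if vert m (Suc j mod m) s t = Suc j mod m then 1 else 0)
          - e * (C j * (\<Prod>a<s. inverse (- q (vert m (Suc j mod m) a 0)))) = 0"
proof -
  let ?w = "Suc j mod m"
  let ?a = "(?w, [B j])" and ?Y = "nf_sum m s t C" and ?nf = "nf_coeff m q ?w s (Suc t)"
  have w: "?w < m" using m by simp
  have "?nf (conv m ?Y (pv ?a)) = (\<Sum>v<m. C v * ?nf (conv m (pv (nf_path m s t v)) (pv ?a)))"
    unfolding conv_nf_sum_left by (rule nf_coeff_lincomb) (rule finsupp_conv_pv)
  also have "\<dots> = (\<Sum>v<m. if v = ?w then C ?w * (if vert m ?w s t = ?w then 1 else 0) else 0)"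
    by (intro sum.cong refl)
       (use swap_coeff_nf_B[of m q] in \<open>auto simp: conv_pv_pv endpt_walk_of nf_coeff_pv nf_weight_def
          cat_def nf_path_def isA_def\<close>)
  finally have R: "?nf (conv m ?Y (pv ?a)) = C ?w * (if vert m ?w s t = ?w then 1 else 0)"
    using w by (simp add: sum.delta')
  have "?nf (conv m (pv ?a) ?Y) = (\<Sum>v<m. C v * ?nf (conv m (pv ?a) (pv (nf_path m s t v))))"
    unfolding conv_nf_sum_right by (rule nf_coeff_lincomb) (rule finsupp_conv_pv)
  also have "\<dots> = (\<Sum>v<m. if v = j then C j * (\<Prod>a<s. inverse (- q (vert m ?w a 0))) else 0)"
    using swap_coeff_B_nf[of m q ?w s t]
    by (intro sum.cong refl) (auto simp: conv_pv_pv nf_coeff_pv nf_weight_def cat_def nf_path_def isA_def)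
  finally have L: "?nf (conv m (pv ?a) ?Y) = C j * (\<Prod>a<s. inverse (- q (vert m ?w a 0)))"
    using j by (simp add: sum.delta')
  have "?nf (\<lambda>r. 1 * conv m ?Y (pv ?a) r + (- e) * conv m (pv ?a) ?Y r) =
        1 * ?nf (conv m ?Y (pv ?a)) + (- e) * ?nf (conv m (pv ?a) ?Y)"
    by (rule nf_coeff_lin) (auto intro: finsupp_conv finsupp_nf_sum)
  with nf_coeff_IdE[OF H] R L show ?thesis by simp
qed

definition step_factor :: "nat \<Rightarrow> (nat \<Rightarrow> 'k::field) \<Rightarrow> nat \<Rightarrow> nat \<Rightarrow> nat \<Rightarrow> 'k" where
  "step_factor m q e l k = (-1) ^ e * inverse (\<Prod>j\<in>{k..<k + l}. q (j mod m))"

lemma prod_inverse_eq: "(\<Prod>x\<in>S. inverse (f x)) = inverse (\<Prod>x\<in>S. (f x :: 'k::field))"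
  using prod_inversef[of f S] by (simp add: comp_def)

lemma prod_inverse_uminus:
  "(\<Prod>b\<in>S. inverse (- f b)) = (-1) ^ card S * inverse (\<Prod>b\<in>S. (f b :: 'k::field))"
proof -
  have "(\<Prod>b\<in>S. inverse (- f b)) = (\<Prod>b\<in>S. (-1) * inverse (f b))"
    by (intro prod.cong refl) (simp add: inverse_minus_eq)
  also have "\<dots> = (\<Prod>b\<in>S. (-1::'k)) * inverse (\<Prod>b\<in>S. f b)"
    by (simp only: prod.distrib prod_inverse_eq)
  finally show ?thesis by simp
qed

lemma neg_one_power_square: "((-1::'k::field) ^ t) * (-1) ^ t = 1"
  by (simp add: power_mult_distrib[symmetric])

lemma fwd_factor_closed:
  fixes q :: "nat \<Rightarrow> 'k::field"
  assumes m: "m > 0" and st: "s mod m = t mod m"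
  shows "(-1) ^ (s + t) * (\<Prod>b<t. inverse (- q (vert m j s b))) = step_factor m q s t (Suc j)"
proof -
  have r: "(\<Prod>b<t. q (vert m j s b)) = (\<Prod>k\<in>{Suc j..<Suc j + t}. q (k mod m))"
  proof (rule prod.reindex_bij_witness[where i = "\<lambda>k. j + t - k" and j = "\<lambda>b. j + t - b"])
    fix b assume "b \<in> {..<t}"
    thus "j + t - (j + t - b) = b" "j + t - b \<in> {Suc j..<Suc j + t}" "q ((j + t - b) mod m) = q (vert m j s b)"
      using vert_backward[OF m st, of b j] by auto
  next
    fix k assume "k \<in> {Suc j..<Suc j + t}"
    thus "j + t - (j + t - k) = k" "j + t - k \<in> {..<t}" by auto
  qed
  show ?thesis
    unfolding prod_inverse_uminus r step_factor_def
    by (simp add: power_add mult.assoc[symmetric] neg_one_power_square mult.commute[of "(-1) ^ s"])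
qed

lemma bwd_factor_closed:
  fixes q :: "nat \<Rightarrow> 'k::field"
  shows "(-1) ^ (s + t) * (\<Prod>a<s. inverse (- q (vert m (Suc j mod m) a 0))) = step_factor m q t s (Suc j)"
proof -
  have "(\<Prod>a<s. q (vert m (Suc j mod m) a 0)) = (\<Prod>a<s. q ((a + Suc j) mod m))"
  proof (rule prod.cong[OF refl])
    fix a
    have "(Suc j mod m + a) mod m = (Suc j + a) mod m" by (rule mod_add_left_eq)
    thus "q (vert m (Suc j mod m) a 0) = q ((a + Suc j) mod m)" by (simp add: vert_def add.commute)
  qed
  also have "\<dots> = (\<Prod>k\<in>{Suc j..<Suc j + s}. q (k mod m))"
    using prod.shift_bounds_nat_ivl[of "\<lambda>k. q (k mod m)" 0 "Suc j" s]
    by (simp add: atLeast0LessThan add.commute)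
  finally show ?thesis
    unfolding prod_inverse_uminus step_factor_def
    by (simp add: power_add mult.assoc[symmetric] neg_one_power_square)
qed

lemma nf_sum_arrow_equations:
  fixes C :: "nat \<Rightarrow> 'k::field"
  assumes m: "m > 0" and j: "j < m"
    and comm: "\<And>a. valid_path m a \<Longrightarrow> plen a = 1 \<Longrightarrow>
       (\<lambda>r. conv m (nf_sum m s t C) (pv a) r - e * conv m (pv a) (nf_sum m s t C) r) \<in> IdE m q"
  shows "C j * (if vert m j s t = j then (\<Prod>b<t. inverse (- q (vert m j s b))) else 0)
           - e * C (Suc j mod m) = 0"
    and "C (Suc j mod m) * (if vert m (Suc j mod m) s t = Suc j mod m then 1 else 0)
           - e * (C j * (\<Prod>a<s. inverse (- q (vert m (Suc j mod m) a 0)))) = 0"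
  using m j by (intro commute_fwd_arrow_eq commute_bwd_arrow_eq comm; simp add: valid_path_def plen_def)+

text \<open>If the sum is nonzero, its paths must be closed: s = t (mod m).  Otherwise the forward
  equations force every coefficient to vanish.\<close>
lemma nf_sum_closed:
  fixes C :: "nat \<Rightarrow> 'k::field"
  assumes m: "m > 0" and nz: "\<exists>v<m. C v \<noteq> 0" and e: "e \<noteq> 0"
    and fwd: "\<And>j. j < m \<Longrightarrow> C j * (if vert m j s t = j then (\<Prod>b<t. inverse (- q (vert m j s b))) else 0)
                                  - e * C (Suc j mod m) = 0"
  shows "s mod m = t mod m"
proof (rule ccontr)
  assume ne: "s mod m \<noteq> t mod m"
  have "C v = 0" if v: "v < m" for v
  proof -
    have j: "pred_mod m v < m" using m by simp
    have "vert m (pred_mod m v) s t \<noteq> pred_mod m v" using vert_self[OF m j] ne by simp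
    hence "e * C (Suc (pred_mod m v) mod m) = 0" using fwd[OF j] by simp
    thus ?thesis using Suc_pred_mod[OF v] e by simp
  qed
  thus False using nz by blast
qed

lemma nf_sum_recurrences:
  fixes C :: "nat \<Rightarrow> 'k::field"
  assumes m: "m > 0" and nz: "\<exists>v<m. C v \<noteq> 0"
    and comm: "\<And>a. valid_path m a \<Longrightarrow> plen a = 1 \<Longrightarrow>
       (\<lambda>r. conv m (nf_sum m s t C) (pv a) r - (-1) ^ (s + t) * conv m (pv a) (nf_sum m s t C) r) \<in> IdE m q"
  shows "s mod m = t mod m"
    and "\<And>j. j < m \<Longrightarrow> C (Suc j mod m) = step_factor m q s t (Suc j) * C j"
    and "\<And>j. j < m \<Longrightarrow> C (Suc j mod m) = step_factor m q t s (Suc j) * C j"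
proof -
  let ?e = "(-1::'k) ^ (s + t)"
  note eqs = nf_sum_arrow_equations[OF m _ comm]
  show st: "s mod m = t mod m"
    by (rule nf_sum_closed[OF m nz _ eqs(1)]) simp_all
  fix j assume j: "j < m"
  have "C j * (\<Prod>b<t. inverse (- q (vert m j s b))) = ?e * C (Suc j mod m)"
    using eqs(1)[OF j] vert_self[OF m j] st by simp
  hence "C (Suc j mod m) = ?e * (\<Prod>b<t. inverse (- q (vert m j s b))) * C j"
    using neg_one_power_square[of "s + t"] by (metis mult.assoc mult.commute mult_1)
  thus "C (Suc j mod m) = step_factor m q s t (Suc j) * C j"
    by (simp only: fwd_factor_closed[OF m st])
  have "Suc j mod m < m" using m by simp
  hence "C (Suc j mod m) = ?e * (C j * (\<Prod>a<s. inverse (- q (vert m (Suc j mod m) a 0))))"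
    using eqs(2)[OF j] vert_self[OF m] st by simp
  hence "C (Suc j mod m) = ?e * (\<Prod>a<s. inverse (- q (vert m (Suc j mod m) a 0))) * C j"
    by (metis mult.assoc mult.commute)
  thus "C (Suc j mod m) = step_factor m q t s (Suc j) * C j"
    by (simp only: bwd_factor_closed)
qed

section \<open>Solving the recurrences\<close>

lemma cyclic_recurrence:
  fixes C f :: "nat \<Rightarrow> 'a::comm_semiring_1"
  assumes m: "m > 0" and rec: "\<And>j. j < m \<Longrightarrow> C (Suc j mod m) = f (Suc j) * C j"
  shows "i \<le> m \<Longrightarrow> C (i mod m) = (\<Prod>k\<in>{1..i}. f k) * C 0"
proof (induction i)
  case 0 thus ?case by simp
next
  case (Suc i)
  hence i: "i < m" by simp
  have "{1..Suc i} = insert (Suc i) {1..i}" by auto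
  hence "(\<Prod>k\<in>{1..Suc i}. f k) = f (Suc i) * (\<Prod>k\<in>{1..i}. f k)" by simp
  with rec[OF i] Suc.IH i show ?case by (simp add: mult.assoc)
qed

lemma prod_step_factor:
  "(\<Prod>k\<in>{1..i}. step_factor m q e l k) =
   (-1) ^ (i * e) * (\<Prod>k\<in>{1..i}. inverse (\<Prod>j\<in>{k..<k + l}. q (j mod m)))"
  by (simp add: step_factor_def prod.distrib power_mult[symmetric] mult.commute[of i])

lemma prod_mod_window:
  fixes m :: nat
  assumes m: "m > 0" and q: "\<forall>k<m. q k \<noteq> (0::'k::field)"
  shows "(\<Prod>k\<in>{a..<a+m}. q (k mod m)) = (\<Prod>k<m. q k)"
proof (induction a)
  case 0 thus ?case by (simp add: atLeast0LessThan)
next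
  case (Suc a)
  have "q (a mod m) * (\<Prod>k\<in>{Suc a..<Suc a + m}. q (k mod m)) = (\<Prod>k\<in>{a..<Suc (a + m)}. q (k mod m))"
    using m by (subst prod.atLeast_Suc_lessThan[of a]) simp_all
  also have "\<dots> = (\<Prod>k\<in>{a..<a + m}. q (k mod m)) * q ((a + m) mod m)"
    by (rule prod.atLeastLessThan_Suc) simp
  also have "\<dots> = q (a mod m) * (\<Prod>k<m. q k)" using Suc by simp
  finally show ?case using q m by simp
qed

lemma prod_mod_windows:
  fixes m :: nat
  assumes m: "m > 0" and q: "\<forall>k<m. q k \<noteq> (0::'k::field)"
  shows "(\<Prod>k\<in>{1..m}. \<Prod>j\<in>{k..<k + t}. q (j mod m)) = (\<Prod>k<m. q k) ^ t"
proof -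
  have "(\<Prod>k\<in>{1..m}. \<Prod>j\<in>{k..<k + t}. q (j mod m)) = (\<Prod>k\<in>{1..m}. \<Prod>b<t. q ((k + b) mod m))"
  proof (rule prod.cong[OF refl])
    fix k
    show "(\<Prod>j\<in>{k..<k + t}. q (j mod m)) = (\<Prod>b<t. q ((k + b) mod m))"
      using prod.shift_bounds_nat_ivl[of "\<lambda>j. q (j mod m)" 0 k t]
      by (simp add: atLeast0LessThan add.commute)
  qed
  also have "\<dots> = (\<Prod>b<t. \<Prod>k\<in>{1..m}. q ((k + b) mod m))" by (rule prod.swap)
  also have "\<dots> = (\<Prod>b<t. \<Prod>k<m. q k)"
  proof (rule prod.cong[OF refl])
    fix b
    have "{1..m} = {1..<1 + m}" by auto
    hence "(\<Prod>k\<in>{1..m}. q ((k + b) mod m)) = (\<Prod>k\<in>{1 + b..<1 + b + m}. q (k mod m))"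
      using prod.shift_bounds_nat_ivl[of "\<lambda>j. q (j mod m)" 1 b "1 + m"] by (simp add: add.commute add.left_commute)
    also have "\<dots> = (\<Prod>k<m. q k)" by (rule prod_mod_window[OF m q])
    finally show "(\<Prod>k\<in>{1..m}. q ((k + b) mod m)) = (\<Prod>k<m. q k)" .
  qed
  finally show ?thesis by simp
qed

text \<open>The solution of the recurrence with factors step_factor, and the constraint on
  zeta = q_0 ... q_(m-1) obtained from one turn around the cycle when C 0 is nonzero.\<close>
lemma step_factor_recurrence:
  fixes C q :: "nat \<Rightarrow> 'k::field"
  assumes m: "m > 0" and rec: "\<And>j. j < m \<Longrightarrow> C (Suc j mod m) = step_factor m q e l (Suc j) * C j"
  shows "\<forall>i<m. C i = (-1) ^ (i * e) * (\<Prod>k\<in>{1..i}. inverse (\<Prod>j\<in>{k..<k + l}. q (j mod m))) * C 0"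
    and "C 0 \<noteq> 0 \<Longrightarrow> \<forall>k<m. q k \<noteq> 0 \<Longrightarrow> (\<Prod>k<m. q k) ^ l = (-1) ^ (m * e)"
proof -
  show "\<forall>i<m. C i = (-1) ^ (i * e) * (\<Prod>k\<in>{1..i}. inverse (\<Prod>j\<in>{k..<k + l}. q (j mod m))) * C 0"
  proof (intro allI impI)
    fix i assume i: "i < m"
    have "C (i mod m) = (\<Prod>k\<in>{1..i}. step_factor m q e l k) * C 0"
      using cyclic_recurrence[where C=C and f="step_factor m q e l", OF m rec less_imp_le[OF i]] .
    thus "C i = (-1) ^ (i * e) * (\<Prod>k\<in>{1..i}. inverse (\<Prod>j\<in>{k..<k + l}. q (j mod m))) * C 0"
      unfolding prod_step_factor using i by simp
  qed
  assume c0: "C 0 \<noteq> 0" and q: "\<forall>k<m. q k \<noteq> 0"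
  have "C (m mod m) = (\<Prod>k\<in>{1..m}. step_factor m q e l k) * C 0"
    using cyclic_recurrence[where C=C and f="step_factor m q e l" and i=m, OF m rec] by simp
  hence "(\<Prod>k\<in>{1..m}. step_factor m q e l k) = 1" using c0 by simp
  hence "(-1) ^ (m * e) * inverse (\<Prod>k\<in>{1..m}. \<Prod>j\<in>{k..<k + l}. q (j mod m)) = 1"
    unfolding prod_step_factor prod_inverse_eq .
  hence "(-1) ^ (m * e) * inverse ((\<Prod>k<m. q k) ^ l) = 1"
    by (simp only: prod_mod_windows[OF m q])
  thus "(\<Prod>k<m. q k) ^ l = (-1) ^ (m * e)"
    by (metis (no_types) divide_inverse divide_eq_1_iff)
qed

lemma walk_of_trues: "v < m \<Longrightarrow> walk_of m v (replicate s True) = map (\<lambda>j. A ((v + j) mod m)) [0..<s]"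
proof (induction s arbitrary: v)
  case 0 thus ?case by simp
next
  case (Suc s)
  have m: "m > 0" using Suc.prems by simp
  have "walk_of m v (replicate (Suc s) True) = A v # map (\<lambda>j. A ((Suc v mod m + j) mod m)) [0..<s]"
    using Suc m by simp
  also have "map (\<lambda>j. A ((Suc v mod m + j) mod m)) [0..<s] = map (\<lambda>j. A ((v + Suc j) mod m)) [0..<s]"
    by (simp add: mod_add_left_eq)
  also have "A v # map (\<lambda>j. A ((v + Suc j) mod m)) [0..<s] = map (\<lambda>j. A ((v + j) mod m)) [0..<Suc s]"
    using Suc.prems by (simp add: map_upt_Suc del: upt_Suc)
  finally show ?case .
qed

lemma walk_of_falses: "u < m \<Longrightarrow> walk_of m u (replicate t False) = map (\<lambda>j. B (vert m u 0 (Suc j))) [0..<t]"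
proof (induction t arbitrary: u)
  case 0 thus ?case by simp
next
  case (Suc t)
  have m: "m > 0" using Suc.prems by simp
  have "walk_of m u (replicate (Suc t) False) =
        B (pred_mod m u) # map (\<lambda>j. B (vert m (pred_mod m u) 0 (Suc j))) [0..<t]"
    using Suc.IH[of "pred_mod m u"] m by simp
  also have "\<dots> = B (vert m u 0 1) # map (\<lambda>j. B (vert m u 0 (Suc (Suc j)))) [0..<t]"
  proof -
    have p: "pred_mod m u = vert m u 0 1" using m by (simp add: vert_def)
    show ?thesis by (simp only: vert_pred_mod[OF m] p[symmetric])
  qed
  also have "\<dots> = map (\<lambda>j. B (vert m u 0 (Suc j))) [0..<Suc t]"
    by (simp add: map_upt_Suc del: upt_Suc)
  finally show ?case .
qed

lemma gam_walk_of: "i < m \<Longrightarrow> gam m i s = (i, walk_of m i (replicate s True))"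
  by (simp add: gam_def walk_of_trues)

lemma dlt_walk_of:
  assumes i: "i < m"
  shows "dlt m i t = ((i + t) mod m, walk_of m ((i + t) mod m) (replicate t False))"
proof -
  have m: "m > 0" using i by simp
  let ?u = "(i + t) mod m"
  have "B ((i + t - 1 - j) mod m) = B (vert m ?u 0 (Suc j))" if "j < t" for j
  proof -
    have "(vert m ?u 0 (Suc j) + Suc j) mod m = ?u mod m"
      using vert_add_back[OF m, of ?u 0 "Suc j"] by simp
    also have "\<dots> = (i + t - 1 - j + Suc j) mod m" using that by simp
    finally have "(vert m ?u 0 (Suc j) + Suc j) mod m = (i + t - 1 - j + Suc j) mod m" .
    hence "vert m ?u 0 (Suc j) mod m = (i + t - 1 - j) mod m" by (rule mod_add_right_cancel_nat[THEN iffD1])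
    thus ?thesis by (simp add: vert_def)
  qed
  thus ?thesis using m by (simp add: dlt_def walk_of_falses)
qed

lemma gam_dlt_nf_path:
  assumes i: "i < m" and st: "s mod m = t mod m"
  shows "conv m (pv (gam m i s)) (pv (dlt m i t)) = (pv (nf_path m s t i) :: path \<Rightarrow> 'k::field)"
proof -
  have "endpt m i (walk_of m i (replicate s True)) = vert m i s 0"
    using endpt_walk_of[OF i, of "replicate s True"] by simp
  also have "\<dots> = (i + t) mod m" using vert_backward[OF _ st, of 0 i] i by simp
  finally show ?thesis
    by (simp add: gam_walk_of[OF i] dlt_walk_of[OF i] conv_pv_pv cat_def nf_path_def walk_of_append)
qed

lemma nf_sum_gam_dlt:
  assumes "m > 0" "s mod m = t mod m"
  shows "nf_sum m s t C = (\<lambda>r. \<Sum>i<m. C i * conv m (pv (gam m i s)) (pv (dlt m i t)) r)"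
  using assms by (auto simp: nf_sum_def gam_dlt_nf_path fun_eq_iff intro!: sum.cong)

theorem mainTheorem3:
  fixes m :: nat and q :: "nat \<Rightarrow> 'k::field" and z :: "path \<Rightarrow> 'k"
  assumes "m \<ge> 1"
    and "\<forall>k<m. q k \<noteq> 0"
    and "z \<in> KQ m"
    and "z \<in> Zgr m q"
    and "z \<notin> IdE m q"
    and "\<exists>n d. bi_hom m q n d z"
  shows "\<exists>s t c0. c0 \<noteq> 0 \<and> s mod m = t mod m \<and>
     (let c = (\<lambda>i. (-1) ^ (i * s) *
                (\<Prod>k\<in>{1..i}. inverse (\<Prod>j\<in>{k..<k + t}. q (j mod m))) * c0)
      in (\<lambda>r. z r - (\<Sum>i<m. c i * conv m (pv (gam m i s)) (pv (dlt m i t)) r)) \<in> IdE m q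
         \<and> (\<forall>i<m. c i = (-1) ^ (i * t) *
                (\<Prod>k\<in>{1..i}. inverse (\<Prod>j\<in>{k..<k + s}. q (j mod m))) * c0))
     \<and> (\<Prod>k<m. q k) ^ s = (-1) ^ (m * t)
     \<and> (\<Prod>k<m. q k) ^ t = (-1) ^ (m * s)"
proof -
  have m: "m > 0" using assms(1) by simp
  obtain n d where "bi_hom m q n d z" using assms(6) by blast
  then obtain s t C where zY: "(\<lambda>r. z r - nf_sum m s t C r) \<in> IdE m q" and nz: "\<exists>v<m. C v \<noteq> 0"
    using bihomogeneous_congruent_nf_sum[OF assms(5)] by blast
  note rec = nf_sum_recurrences[OF m nz nf_sum_commutes_arrows[OF assms(4) zY]]
  note sol_st = step_factor_recurrence[OF m rec(2)] and sol_ts = step_factor_recurrence[OF m rec(3)]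
  define c where "c i = (-1) ^ (i * s) * (\<Prod>k\<in>{1..i}. inverse (\<Prod>j\<in>{k..<k + t}. q (j mod m))) * C 0"
    for i
  have C: "\<forall>i<m. C i = c i" unfolding c_def using sol_st(1) by blast
  have c0: "C 0 \<noteq> 0" using nz C by (auto simp: c_def)
  have "nf_sum m s t C = nf_sum m s t c" unfolding nf_sum_def using C by (intro ext sum.cong) auto
  with zY have "(\<lambda>r. z r - (\<Sum>i<m. c i * conv m (pv (gam m i s)) (pv (dlt m i t)) r)) \<in> IdE m q"
    using nf_sum_gam_dlt[OF m rec(1), of c] by simp
  moreover have "\<forall>i<m. c i = (-1) ^ (i * t) * (\<Prod>k\<in>{1..i}. inverse (\<Prod>j\<in>{k..<k + s}. q (j mod m))) * C 0"
    using sol_ts(1) C by metis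
  moreover have "(\<Prod>k<m. q k) ^ s = (-1) ^ (m * t)" "(\<Prod>k<m. q k) ^ t = (-1) ^ (m * s)"
    using sol_ts(2) sol_st(2) c0 assms(2) by auto
  moreover have "(\<lambda>i. (-1) ^ (i * s) * (\<Prod>k\<in>{1..i}. inverse (\<Prod>j\<in>{k..<k + t}. q (j mod m))) * C 0) = c"
    by (rule ext) (simp only: c_def)
  ultimately show ?thesis
    using c0 rec(1) by (intro exI[of _ s] exI[of _ t] exI[of _ "C 0"]) (simp only: Let_def simp_thms)
qed

end
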